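(* Let $m,n\ge 3$ and let $e$ be any hyperedge of $\mathcal{C}^3_{m,n}$. Then $\mathcal{E_S}(\mathcal{C}^3_{m,n})>\mathcal{E_S}(\mathcal{C}^3_{m,n}-e)$.
   Context: For a hypergraph $\mathcal{H}$ and distinct vertices $i,j$, the co-degree $c_{ij}$ is the number of hyperedges containing both $i$ and $j$. The Seidel matrix $\mathcal{S}(\mathcal{H})$ has zero diagonal and $(i,j)$-entry $1-2c_{ij}$ for $i\neq j$. The Seidel energy $\mathcal{E_S}(\mathcal{H})$ is the sum of the absolute values of the eigenvalues of $\mathcal{S}(\mathcal{H})$. The complete $3$-uniform bipartite hypergraph $\mathcal{C}^3_{m,n}=(V_1,V_2,E)$ has vertex set $V_1\sqcup V_2$, $|V_1|=m$, $|V_2|=n$, and $E$ = all $3$-subsets meeting both $V_1$ and $V_2$. For a hyperedge $e$, $\mathcal{H}-e$ denotes the hypergraph with the same vertex set and hyperedge set $E\setminus\{e\}$. *)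

theory Defs
  imports "Jordan_Normal_Form.Char_Poly" "HOL-Computational_Algebra.Polynomial"
begin

text \<open>A hypergraph on the vertex set {0..<N} is given by its set of hyperedges
  (each a set of vertices).  Co-degree of two vertices.\<close>
definition codegree :: "nat set set \<Rightarrow> nat \<Rightarrow> nat \<Rightarrow> nat" where
  "codegree E i j = card {e \<in> E. i \<in> e \<and> j \<in> e}"

definition seidel_matrix :: "nat \<Rightarrow> nat set set \<Rightarrow> real mat" where
  "seidel_matrix N E = mat N N (\<lambda>(i, j). if i = j then 0 else 1 - 2 * real (codegree E i j))"

text \<open>Seidel energy: sum of absolute values of the eigenvalues (with algebraic
  multiplicity), i.e. the roots of the characteristic polynomial over the complex numbers.\<close>
definition seidel_energy :: "nat \<Rightarrow> nat set set \<Rightarrow> real" where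
  "seidel_energy N E =
     sum_mset (image_mset cmod (proots (char_poly (map_mat complex_of_real (seidel_matrix N E)))))"

text \<open>Complete 3-uniform bipartite hypergraph C^3_{m,n}: V1 = {0..<m}, V2 = {m..<m+n}.\<close>
definition complete_bip3_edges :: "nat \<Rightarrow> nat \<Rightarrow> nat set set" where
  "complete_bip3_edges m n =
     {e. e \<subseteq> {0..<m+n} \<and> card e = 3 \<and> e \<inter> {0..<m} \<noteq> {} \<and> e \<inter> {m..<m+n} \<noteq> {}}"

end

theory Submission
  imports Defs "Jordan_Normal_Form.Schur_Decomposition"
begin

text \<open>
  Both Seidel matrices are real symmetric with zero diagonal, so their eigenvalues are real and
  sum to zero, and the energy is twice the total size of the negative eigenvalues.
  The matrix of \<open>C\<^sup>3\<^sub>m\<^sub>,\<^sub>n\<close> has a vector that is constant on each part as an eigenvector, for the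
  negative eigenvalue \<open>c\<close> of its \<open>2 \<times> 2\<close> quotient matrix; hence its energy is at least
  \<open>-2c\<close>.
  After removing \<open>e\<close>, the quadratic form \<open>x\<^sup>T S x\<close> depends on \<open>x\<close> only through the sums and
  the sums of squares of \<open>x\<close> over the four cells \<open>V\<^sub>1 - e\<close>, \<open>V\<^sub>1 \<inter> e\<close>, \<open>V\<^sub>2 \<inter> e\<close>,
  \<open>V\<^sub>2 - e\<close>.  Cauchy-Schwarz on each cell and Sylvester's criterion for explicit \<open>4 \<times> 4\<close> and
  \<open>3 \<times> 3\<close> forms show \<open>x\<^sup>T S x > c |x|\<^sup>2\<close> for \<open>x \<noteq> 0\<close>, and \<open>x\<^sup>T S x \<ge> 0\<close> whenever
  the entries of \<open>x\<close> sum to zero.  The second inequality leaves room for at most one negative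
  eigenvalue and the first puts it above \<open>c\<close>, so the energy drops below \<open>-2c\<close>.
\<close>

section \<open>Quadratic forms and cell sums\<close>

definition quad_form :: "nat \<Rightarrow> real mat \<Rightarrow> (nat \<Rightarrow> real) \<Rightarrow> real" where
  "quad_form N A x = (\<Sum>i<N. \<Sum>j<N. A $$ (i,j) * x i * x j)"

definition cell_sum :: "nat \<Rightarrow> (nat \<Rightarrow> nat) \<Rightarrow> (nat \<Rightarrow> real) \<Rightarrow> nat \<Rightarrow> real" where
  "cell_sum N f x K = (\<Sum>i \<in> {i \<in> {..<N}. f i = K}. x i)"

lemma sum_cellwise:
  assumes "\<And>i. i < N \<Longrightarrow> f i < k"
  shows "(\<Sum>i<N. g (f i) * x i) = (\<Sum>K<k. g K * cell_sum N f x K)"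
proof -
  have "(\<Sum>i<N. g (f i) * x i) = (\<Sum>K<k. \<Sum>i \<in> {i \<in> {..<N}. f i = K}. g (f i) * x i)"
    using assms by (intro sum.group[symmetric]) auto
  also have "\<dots> = (\<Sum>K<k. g K * cell_sum N f x K)"
    by (simp add: cell_sum_def sum_distrib_left)
  finally show ?thesis .
qed

lemma sum_eq_sum_cell_sum:
  assumes "\<And>i. i < N \<Longrightarrow> f i < k"
  shows "(\<Sum>i<N. x i) = (\<Sum>K<k. cell_sum N f x K)"
  using sum_cellwise[OF assms, where g = "\<lambda>_. 1"] by simp

lemma sum_power2_le_card_mult:
  fixes x :: "'a \<Rightarrow> real"
  shows "(\<Sum>i\<in>A. x i)\<^sup>2 \<le> real (card A) * (\<Sum>i\<in>A. (x i)\<^sup>2)"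
proof -
  have "0 \<le> (\<Sum>i\<in>A. \<Sum>j\<in>A. (x i - x j)\<^sup>2)"
    by (intro sum_nonneg) auto
  also have "\<dots> = (\<Sum>i\<in>A. \<Sum>j\<in>A. (x i)\<^sup>2) + (\<Sum>i\<in>A. \<Sum>j\<in>A. (x j)\<^sup>2) - 2 * (\<Sum>i\<in>A. \<Sum>j\<in>A. x i * x j)"
    by (simp add: power2_diff sum.distrib sum_subtractf sum_distrib_left mult.assoc)
  also have "\<dots> = 2 * (real (card A) * (\<Sum>i\<in>A. (x i)\<^sup>2) - (\<Sum>i\<in>A. x i)\<^sup>2)"
    by (simp add: power2_eq_square sum_product sum_distrib_left algebra_simps)
  finally show ?thesis
    by simp
qed

lemma cell_sum_power2_le:
  "(cell_sum N f x K)\<^sup>2 \<le> real (card {i \<in> {..<N}. f i = K}) * cell_sum N f (\<lambda>i. (x i)\<^sup>2) K"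
  unfolding cell_sum_def by (rule sum_power2_le_card_mult)

lemma quad_form_cellwise:
  assumes cells: "\<And>i. i < N \<Longrightarrow> f i < k"
    and entries: "\<And>i j. i < N \<Longrightarrow> j < N \<Longrightarrow> A $$ (i,j) = (if i = j then 0 else w (f i) (f j))"
  shows "quad_form N A x = (\<Sum>K<k. \<Sum>L<k. w K L * cell_sum N f x K * cell_sum N f x L)
    - (\<Sum>K<k. w K K * cell_sum N f (\<lambda>i. (x i)\<^sup>2) K)"
proof -
  have "quad_form N A x
      = (\<Sum>i<N. \<Sum>j<N. w (f i) (f j) * x i * x j - (if j = i then w (f i) (f i) * (x i)\<^sup>2 else 0))"
    unfolding quad_form_def by (intro sum.cong refl) (simp add: entries power2_eq_square)
  also have "\<dots> = (\<Sum>i<N. \<Sum>j<N. w (f i) (f j) * x i * x j) - (\<Sum>i<N. w (f i) (f i) * (x i)\<^sup>2)"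
    by (simp add: sum_subtractf)
  also have "(\<Sum>i<N. \<Sum>j<N. w (f i) (f j) * x i * x j)
      = (\<Sum>i<N. (\<Sum>L<k. w (f i) L * cell_sum N f x L) * x i)"
  proof (intro sum.cong refl)
    fix i
    have "(\<Sum>j<N. w (f i) (f j) * x i * x j) = (\<Sum>j<N. w (f i) (f j) * x j) * x i"
      by (simp add: sum_distrib_left sum_distrib_right ac_simps)
    also have "\<dots> = (\<Sum>L<k. w (f i) L * cell_sum N f x L) * x i"
      by (simp only: sum_cellwise[OF cells, where g = "w (f i)"])
    finally show "(\<Sum>j<N. w (f i) (f j) * x i * x j) = (\<Sum>L<k. w (f i) L * cell_sum N f x L) * x i" .
  qed
  also have "\<dots> = (\<Sum>K<k. (\<Sum>L<k. w K L * cell_sum N f x L) * cell_sum N f x K)"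
    by (rule sum_cellwise[OF cells, where g = "\<lambda>K. \<Sum>L<k. w K L * cell_sum N f x L"])
  also have "\<dots> = (\<Sum>K<k. \<Sum>L<k. w K L * cell_sum N f x K * cell_sum N f x L)"
    by (simp add: sum_distrib_left ac_simps)
  also have "(\<Sum>i<N. w (f i) (f i) * (x i)\<^sup>2) = (\<Sum>K<k. w K K * cell_sum N f (\<lambda>i. (x i)\<^sup>2) K)"
    by (rule sum_cellwise[OF cells])
  finally show ?thesis .
qed

section \<open>Spectra of real symmetric matrices\<close>

lemma index_mult_mat_sum:
  assumes "X \<in> carrier_mat n k" "Y \<in> carrier_mat k m" "i < n" "j < m"
  shows "(X * Y) $$ (i,j) = (\<Sum>l<k. X $$ (i,l) * Y $$ (l,j))"
  using assms by (auto simp: scalar_prod_def lessThan_atLeast0 intro!: sum.cong)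

lemma sum_diag_mult_comm:
  fixes X Y :: "'a :: comm_semiring_0 mat"
  assumes "X \<in> carrier_mat n k" "Y \<in> carrier_mat k n"
  shows "(\<Sum>i<n. (X * Y) $$ (i,i)) = (\<Sum>j<k. (Y * X) $$ (j,j))"
proof -
  have "(\<Sum>i<n. (X * Y) $$ (i,i)) = (\<Sum>i<n. \<Sum>j<k. X $$ (i,j) * Y $$ (j,i))"
    by (intro sum.cong refl index_mult_mat_sum[OF assms]) auto
  also have "\<dots> = (\<Sum>j<k. \<Sum>i<n. Y $$ (j,i) * X $$ (i,j))"
    by (subst sum.swap) (simp only: mult.commute)
  also have "\<dots> = (\<Sum>j<k. (Y * X) $$ (j,j))"
    by (intro sum.cong refl index_mult_mat_sum[OF assms(2,1), symmetric]) auto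
  finally show ?thesis .
qed

lemma sum_upper_triangular_col:
  fixes B :: "'a :: comm_semiring_0 mat"
  assumes "upper_triangular B" "B \<in> carrier_mat N N" "j < N"
  shows "(\<Sum>l<N. f l * B $$ (l,j)) = (\<Sum>l<Suc j. f l * B $$ (l,j))"
  by (rule sum.mono_neutral_right) (use assms in \<open>auto simp: upper_triangular_def\<close>)

definition mult_mat_fun :: "nat \<Rightarrow> real mat \<Rightarrow> (nat \<Rightarrow> complex) \<Rightarrow> nat \<Rightarrow> complex" where
  "mult_mat_fun N A z i = (\<Sum>j<N. complex_of_real (A $$ (i,j)) * z j)"

lemma mult_mat_fun_lincomb:
  "mult_mat_fun N A (\<lambda>k. a * f k + b * g k) i = a * mult_mat_fun N A f i + b * mult_mat_fun N A g i"
  by (simp add: mult_mat_fun_def sum.distrib sum_distrib_left algebra_simps)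

lemma mult_mat_fun_cong:
  "(\<And>k. k < N \<Longrightarrow> f k = g k) \<Longrightarrow> mult_mat_fun N A f i = mult_mat_fun N A g i"
  by (simp add: mult_mat_fun_def)

lemma sum_cnj_mult_self: "(\<Sum>k<N. cnj (z k) * z k) = complex_of_real (\<Sum>k<N. (cmod (z k))\<^sup>2)"
  unfolding of_real_sum complex_norm_square by (simp add: mult.commute)

lemma sum_cmod_power2_pos:
  fixes z :: "nat \<Rightarrow> complex"
  assumes "\<exists>k<N. z k \<noteq> 0"
  shows "(\<Sum>k<N. (cmod (z k))\<^sup>2) > 0"
  using assms by (auto intro!: sum_pos2)

context
  fixes N :: nat and A :: "real mat"
  assumes symmetric: "\<And>i j. i < N \<Longrightarrow> j < N \<Longrightarrow> A $$ (i,j) = A $$ (j,i)"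
begin

lemma mult_mat_fun_adjoint:
  "(\<Sum>k<N. cnj (z k) * mult_mat_fun N A w k) = (\<Sum>k<N. cnj (mult_mat_fun N A z k) * w k)"
proof -
  have "(\<Sum>k<N. cnj (z k) * mult_mat_fun N A w k)
      = (\<Sum>i<N. \<Sum>k<N. cnj (z k) * complex_of_real (A $$ (k,i)) * w i)"
    by (subst sum.swap) (simp add: mult_mat_fun_def sum_distrib_left mult.assoc)
  also have "\<dots> = (\<Sum>i<N. cnj (mult_mat_fun N A z i) * w i)"
    by (intro sum.cong refl) (simp add: mult_mat_fun_def sum_distrib_left sum_distrib_right symmetric ac_simps)
  finally show ?thesis .
qed

lemma hermitian_form_eq_quad_form:
  "(\<Sum>i<N. cnj (z i) * mult_mat_fun N A z i)
     = complex_of_real (quad_form N A (\<lambda>i. Re (z i)) + quad_form N A (\<lambda>i. Im (z i)))"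
proof -
  have expand: "cnj (z i) * complex_of_real r * z j =
     Complex (r * (Re (z i) * Re (z j)) + r * (Im (z i) * Im (z j)))
             (r * (Re (z i) * Im (z j)) - r * (Im (z i) * Re (z j)))" for i j r
    by (simp add: complex_eq_iff algebra_simps)
  have swap: "(\<Sum>i<N. \<Sum>j<N. A $$ (i,j) * (Re (z i) * Im (z j)))
      = (\<Sum>i<N. \<Sum>j<N. A $$ (i,j) * (Im (z i) * Re (z j)))"
    by (subst sum.swap) (intro sum.cong refl, simp add: symmetric mult.commute)
  have "(\<Sum>i<N. cnj (z i) * mult_mat_fun N A z i)
      = (\<Sum>i<N. \<Sum>j<N. cnj (z i) * complex_of_real (A $$ (i,j)) * z j)"
    by (simp add: mult_mat_fun_def sum_distrib_left mult.assoc)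
  also have "\<dots> = complex_of_real (quad_form N A (\<lambda>i. Re (z i)) + quad_form N A (\<lambda>i. Im (z i)))"
  proof (rule complex_eqI)
    show "Re (\<Sum>i<N. \<Sum>j<N. cnj (z i) * complex_of_real (A $$ (i,j)) * z j) =
      Re (complex_of_real (quad_form N A (\<lambda>i. Re (z i)) + quad_form N A (\<lambda>i. Im (z i))))"
      unfolding expand Re_sum quad_form_def by (simp add: sum.distrib mult.assoc)
    show "Im (\<Sum>i<N. \<Sum>j<N. cnj (z i) * complex_of_real (A $$ (i,j)) * z j) =
      Im (complex_of_real (quad_form N A (\<lambda>i. Re (z i)) + quad_form N A (\<lambda>i. Im (z i))))"
      unfolding expand Im_sum using swap by (simp add: sum_subtractf)
  qed
  finally show ?thesis .
qed

context
  assumes carrier: "A \<in> carrier_mat N N"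
begin

abbreviation "AC \<equiv> map_mat complex_of_real A"

lemma carrier_AC: "AC \<in> carrier_mat N N"
  using carrier by simp

lemma mult_mat_vec_AC_nth:
  "v \<in> carrier_vec N \<Longrightarrow> i < N \<Longrightarrow> (AC *\<^sub>v v) $ i = mult_mat_fun N A (\<lambda>j. v $ j) i"
  using carrier by (auto simp: mult_mat_fun_def scalar_prod_def lessThan_atLeast0 intro!: sum.cong)

lemma char_poly_AC_neq_0: "char_poly AC \<noteq> 0"
  using degree_monic_char_poly[OF carrier_AC] by auto

lemma char_poly_AC_eq_prod:
  assumes "mset es = proots (char_poly AC)"
  shows "char_poly AC = (\<Prod>a\<leftarrow>es. [:- a, 1:])"
proof -
  have "lead_coeff (char_poly AC) = 1"
    using degree_monic_char_poly[OF carrier_AC] by simp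
  then have "char_poly AC = (\<Prod>a\<in>#proots (char_poly AC). [:- a, 1:])"
    using complex_poly_decompose_multiset[of "char_poly AC"] by simp
  also have "\<dots> = (\<Prod>a\<leftarrow>es. [:- a, 1:])"
    by (simp flip: assms prod_mset_prod_list)
  finally show ?thesis .
qed

lemma proot_eigenfun:
  assumes "\<mu> \<in># proots (char_poly AC)"
  obtains z where "\<exists>k<N. z k \<noteq> 0" "\<And>k. k < N \<Longrightarrow> mult_mat_fun N A z k = \<mu> * z k"
proof -
  have "eigenvalue AC \<mu>"
    using assms char_poly_AC_neq_0 eigenvalue_root_char_poly[OF carrier_AC] by simp
  then obtain v where "v \<in> carrier_vec N" "v \<noteq> 0\<^sub>v N" "AC *\<^sub>v v = \<mu> \<cdot>\<^sub>v v"
    unfolding eigenvalue_def eigenvector_def using carrier by auto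
  then show ?thesis
    by (intro that[of "\<lambda>k. v $ k"]) (auto simp: vec_eq_iff mult_mat_vec_AC_nth[symmetric])
qed

lemma proot_rayleigh:
  assumes "\<mu> \<in># proots (char_poly AC)"
  obtains a b where "\<exists>k<N. a k \<noteq> 0 \<or> b k \<noteq> 0"
    and "Re \<mu> * (\<Sum>k<N. (a k)\<^sup>2 + (b k)\<^sup>2) = quad_form N A a + quad_form N A b"
    and "Im \<mu> = 0"
proof -
  obtain z where nz: "\<exists>k<N. z k \<noteq> 0" and ev: "\<And>k. k < N \<Longrightarrow> mult_mat_fun N A z k = \<mu> * z k"
    using proot_eigenfun[OF assms] by blast
  define r where "r = (\<Sum>k<N. (cmod (z k))\<^sup>2)"
  have "\<mu> * complex_of_real r = (\<Sum>k<N. cnj (z k) * (\<mu> * z k))"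
    unfolding r_def sum_cnj_mult_self[symmetric] by (simp add: sum_distrib_left ac_simps)
  also have "\<dots> = (\<Sum>k<N. cnj (z k) * mult_mat_fun N A z k)"
    by (simp add: ev)
  also have "\<dots> = complex_of_real (quad_form N A (\<lambda>k. Re (z k)) + quad_form N A (\<lambda>k. Im (z k)))"
    by (rule hermitian_form_eq_quad_form)
  finally have eq: "\<mu> * complex_of_real r = \<dots>" .
  have "r > 0"
    unfolding r_def using nz by (rule sum_cmod_power2_pos)
  show ?thesis
  proof (rule that[of "\<lambda>k. Re (z k)" "\<lambda>k. Im (z k)"])
    show "\<exists>k<N. Re (z k) \<noteq> 0 \<or> Im (z k) \<noteq> 0"
      using nz by (auto simp: complex_eq_iff)
    show "Re \<mu> * (\<Sum>k<N. (Re (z k))\<^sup>2 + (Im (z k))\<^sup>2)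
        = quad_form N A (\<lambda>k. Re (z k)) + quad_form N A (\<lambda>k. Im (z k))"
      using arg_cong[OF eq, of Re] by (simp add: r_def cmod_power2)
    show "Im \<mu> = 0"
      using arg_cong[OF eq, of Im] \<open>r > 0\<close> by simp
  qed
qed

lemma proots_real: "\<mu> \<in># proots (char_poly AC) \<Longrightarrow> \<mu> = complex_of_real (Re \<mu>)"
  by (metis proot_rayleigh complex_is_Real_iff of_real_Re)

lemma proots_gt:
  assumes "\<mu> \<in># proots (char_poly AC)"
    and gt: "\<And>x. \<exists>i<N. x i \<noteq> 0 \<Longrightarrow> quad_form N A x > c * (\<Sum>i<N. (x i)\<^sup>2)"
  shows "Re \<mu> > c"
proof -
  obtain a b where nz: "\<exists>k<N. a k \<noteq> 0 \<or> b k \<noteq> 0"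
    and eq: "Re \<mu> * (\<Sum>k<N. (a k)\<^sup>2 + (b k)\<^sup>2) = quad_form N A a + quad_form N A b"
    using proot_rayleigh[OF assms(1)] by blast
  define r where "r = (\<Sum>k<N. (a k)\<^sup>2 + (b k)\<^sup>2)"
  have ge: "quad_form N A x \<ge> c * (\<Sum>i<N. (x i)\<^sup>2)" for x
    using gt[of x] by (cases "\<exists>i<N. x i \<noteq> 0") (auto simp: quad_form_def)
  have "c * r = c * (\<Sum>k<N. (a k)\<^sup>2) + c * (\<Sum>k<N. (b k)\<^sup>2)"
    by (simp add: r_def sum.distrib distrib_left)
  also have "\<dots> < quad_form N A a + quad_form N A b"
  proof (cases "\<exists>k<N. a k \<noteq> 0")
    case True
    then show ?thesis using gt[of a] ge[of b] by simp
  next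
    case False
    then have "\<exists>k<N. b k \<noteq> 0" using nz by auto
    then show ?thesis using gt[of b] ge[of a] by simp
  qed
  also have "\<dots> = Re \<mu> * r"
    using eq by (simp add: r_def)
  finally have "c * r < Re \<mu> * r" .
  moreover have "r \<ge> 0"
    unfolding r_def by (simp add: sum_nonneg)
  ultimately show ?thesis
    by (rule mult_right_less_imp_less)
qed

lemma schur_decomposition_AC:
  assumes "mset es = proots (char_poly AC)"
  obtains B P Q where "B \<in> carrier_mat N N" "P \<in> carrier_mat N N" "Q \<in> carrier_mat N N"
    "Q * P = 1\<^sub>m N" "AC = P * B * Q" "upper_triangular B" "diag_mat B = es"
proof -
  obtain B P Q where "schur_decomposition AC es = (B,P,Q)"
    by (cases "schur_decomposition AC es")
  then have "similar_mat_wit AC B P Q \<and> upper_triangular B \<and> diag_mat B = es"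
    by (rule schur_decomposition[OF carrier_AC char_poly_AC_eq_prod[OF assms]])
  then show ?thesis
    using carrier by (intro that[of B P Q]) (auto simp: similar_mat_wit_def Let_def)
qed

lemma sum_proots_eq_0:
  assumes diag: "\<And>i. i < N \<Longrightarrow> A $$ (i,i) = 0"
  shows "sum_mset (proots (char_poly AC)) = 0"
proof -
  obtain es where es: "mset es = proots (char_poly AC)"
    using ex_mset by blast
  obtain B P Q where B: "B \<in> carrier_mat N N" and P: "P \<in> carrier_mat N N"
    and Q: "Q \<in> carrier_mat N N" and QP: "Q * P = 1\<^sub>m N" and AC: "AC = P * B * Q"
    and diag_B: "diag_mat B = es"
    by (rule schur_decomposition_AC[OF es])
  have "Q * (P * B) = B"
    using B by (simp add: assoc_mult_mat[OF Q P B, symmetric] QP)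
  have "0 = (\<Sum>i<N. AC $$ (i,i))"
    using diag carrier by simp
  also have "\<dots> = (\<Sum>i<N. (Q * (P * B)) $$ (i,i))"
    unfolding AC using B P Q by (intro sum_diag_mult_comm) auto
  also have "\<dots> = sum_list (diag_mat B)"
    using carrier_matD[OF B] \<open>Q * (P * B) = B\<close>
    by (simp add: diag_mat_def sum_list_sum_nth lessThan_atLeast0)
  also have "\<dots> = sum_mset (proots (char_poly AC))"
    by (simp add: sum_mset_sum_list flip: es diag_B)
  finally show ?thesis by simp
qed

lemma sum_cmod_proots:
  assumes "\<And>i. i < N \<Longrightarrow> A $$ (i,i) = 0"
  shows "sum_mset (image_mset cmod (proots (char_poly AC)))
    = 2 * sum_mset (image_mset (\<lambda>r. max 0 (- Re r)) (proots (char_poly AC)))"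
proof -
  define R where "R = proots (char_poly AC)"
  have "cmod r = Re r + 2 * max 0 (- Re r)" if "r \<in># R" for r
  proof -
    have "cmod r = \<bar>Re r\<bar>"
      using arg_cong[OF proots_real[OF that[unfolded R_def]], of cmod] by simp
    then show ?thesis by auto
  qed
  then have "sum_mset (image_mset cmod R) = sum_mset (image_mset (\<lambda>r. Re r + 2 * max 0 (- Re r)) R)"
    by (intro arg_cong[where f = sum_mset] image_mset_cong)
  also have "\<dots> = Re (sum_mset R) + 2 * sum_mset (image_mset (\<lambda>r. max 0 (- Re r)) R)"
    by (induction R) (auto simp: algebra_simps)
  also have "sum_mset R = 0"
    unfolding R_def by (rule sum_proots_eq_0[OF assms])
  finally show ?thesis
    unfolding R_def by simp
qed

lemma proots_pair_schur_columns:
  assumes "{#r1, r2#} \<subseteq># proots (char_poly AC)"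
  obtains p0 p1 b where
    "\<And>k. k < N \<Longrightarrow> mult_mat_fun N A p0 k = r1 * p0 k"
    "\<And>k. k < N \<Longrightarrow> mult_mat_fun N A p1 k = b * p0 k + r2 * p1 k"
    "\<And>\<alpha> \<beta>. (\<And>k. k < N \<Longrightarrow> \<alpha> * p0 k + \<beta> * p1 k = 0) \<Longrightarrow> \<alpha> = 0 \<and> \<beta> = 0"
proof -
  obtain xs where xs: "mset xs = proots (char_poly AC) - {#r1, r2#}"
    using ex_mset by blast
  have "mset (r1 # r2 # xs) = {#r1, r2#} + (proots (char_poly AC) - {#r1, r2#})"
    by (simp add: xs)
  also have "\<dots> = proots (char_poly AC)"
    using assms by (rule subset_mset.add_diff_inverse)
  finally obtain B P Q where B: "B \<in> carrier_mat N N" and P: "P \<in> carrier_mat N N"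
    and Q: "Q \<in> carrier_mat N N" and QP: "Q * P = 1\<^sub>m N" and AC: "AC = P * B * Q"
    and ut: "upper_triangular B" and diag_B: "diag_mat B = r1 # r2 # xs"
    by (rule schur_decomposition_AC)
  have "length (diag_mat B) = N"
    using B by (simp add: diag_mat_def)
  then have N: "2 \<le> N"
    unfolding diag_B by simp
  have B_diag: "B $$ (0,0) = r1" "B $$ (1,1) = r2"
    using diag_B B N unfolding diag_mat_def by (auto simp: list_eq_iff_nth_eq)
  have "AC * P = (P * B) * (Q * P)"
    unfolding AC using B P Q by (metis assoc_mult_mat mult_carrier_mat)
  then have AP: "AC * P = P * B"
    using B P by (simp add: QP)
  have col: "mult_mat_fun N A (\<lambda>i. P $$ (i,j)) k = (\<Sum>l<Suc j. P $$ (k,l) * B $$ (l,j))"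
    if "k < N" "j < N" for j k
  proof -
    have "mult_mat_fun N A (\<lambda>i. P $$ (i,j)) k = (AC * P) $$ (k,j)"
      unfolding index_mult_mat_sum[OF carrier_AC P that] mult_mat_fun_def
      using that carrier by (auto intro!: sum.cong)
    also have "\<dots> = (\<Sum>l<N. P $$ (k,l) * B $$ (l,j))"
      unfolding AP using that by (rule index_mult_mat_sum[OF P B])
    finally show ?thesis
      using sum_upper_triangular_col[OF ut B \<open>j < N\<close>] by simp
  qed
  show ?thesis
  proof (rule that[of "\<lambda>k. P $$ (k,0)" "\<lambda>k. P $$ (k,1)" "B $$ (0,1)"])
    fix k assume "k < N"
    then show "mult_mat_fun N A (\<lambda>k. P $$ (k,0)) k = r1 * P $$ (k,0)"
      using col[of k 0] N B_diag by simp
    show "mult_mat_fun N A (\<lambda>k. P $$ (k,1)) k = B $$ (0,1) * P $$ (k,0) + r2 * P $$ (k,1)"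
      using col[of k 1] \<open>k < N\<close> N B_diag by (simp add: ac_simps)
  next
    fix \<alpha> \<beta> assume zero: "\<And>k. k < N \<Longrightarrow> \<alpha> * P $$ (k,0) + \<beta> * P $$ (k,1) = 0"
    have "\<alpha> * (Q * P) $$ (j,0) + \<beta> * (Q * P) $$ (j,1) = 0" if "j < N" for j
    proof -
      have "\<alpha> * (Q * P) $$ (j,0) + \<beta> * (Q * P) $$ (j,1)
          = (\<Sum>k<N. Q $$ (j,k) * (\<alpha> * P $$ (k,0) + \<beta> * P $$ (k,1)))"
        using that N by (simp add: index_mult_mat_sum[OF Q P] sum.distrib sum_distrib_left algebra_simps)
      also have "\<dots> = 0"
        using zero by (intro sum.neutral) simp
      finally show ?thesis .
    qed
    from this[of 0] this[of 1] show "\<alpha> = 0 \<and> \<beta> = 0"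
      using N by (simp add: QP)
  qed
qed

text \<open>
  The first two Schur vectors span an \<open>A\<close>-invariant plane on which \<open>(A - r1) (A - r2)\<close>
  vanishes; it meets the hyperplane of vectors with zero sum.
\<close>

lemma proots_pair_annihilated:
  assumes "{#r1, r2#} \<subseteq># proots (char_poly AC)"
  obtains z where "\<exists>k<N. z k \<noteq> 0" "(\<Sum>k<N. z k) = 0"
    "\<And>k. k < N \<Longrightarrow> mult_mat_fun N A (mult_mat_fun N A z) k
        = (r1 + r2) * mult_mat_fun N A z k - r1 * r2 * z k"
proof -
  obtain p0 p1 b where
    p0: "\<And>k. k < N \<Longrightarrow> mult_mat_fun N A p0 k = r1 * p0 k" and
    p1: "\<And>k. k < N \<Longrightarrow> mult_mat_fun N A p1 k = b * p0 k + r2 * p1 k" and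
    indep: "\<And>\<alpha> \<beta>. (\<And>k. k < N \<Longrightarrow> \<alpha> * p0 k + \<beta> * p1 k = 0) \<Longrightarrow> \<alpha> = 0 \<and> \<beta> = 0"
    using proots_pair_schur_columns[OF assms] by blast
  define s0 s1 where "s0 = (\<Sum>k<N. p0 k)" and "s1 = (\<Sum>k<N. p1 k)"
  define \<alpha> \<beta> where "\<alpha> = (if s0 = 0 \<and> s1 = 0 then 1 else s1)"
    and "\<beta> = (if s0 = 0 \<and> s1 = 0 then 0 else - s0)"
  define z where "z k = \<alpha> * p0 k + \<beta> * p1 k" for k
  have Mz: "mult_mat_fun N A z k = (\<alpha> * r1 + \<beta> * b) * p0 k + (\<beta> * r2) * p1 k" if "k < N" for k
    unfolding z_def mult_mat_fun_lincomb using p0[OF that] p1[OF that] by (simp add: algebra_simps)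
  show ?thesis
  proof (rule that[of z])
    show "\<exists>k<N. z k \<noteq> 0"
    proof (rule ccontr)
      assume "\<not> (\<exists>k<N. z k \<noteq> 0)"
      then have "\<alpha> = 0 \<and> \<beta> = 0"
        using indep[of \<alpha> \<beta>] unfolding z_def by auto
      then show False
        unfolding \<alpha>_def \<beta>_def by (auto split: if_splits)
    qed
    show "(\<Sum>k<N. z k) = 0"
      by (simp add: z_def sum.distrib flip: sum_distrib_left s0_def s1_def)
        (simp add: \<alpha>_def \<beta>_def)
  next
    fix k assume "k < N"
    have "mult_mat_fun N A (mult_mat_fun N A z) k
        = mult_mat_fun N A (\<lambda>k. (\<alpha> * r1 + \<beta> * b) * p0 k + (\<beta> * r2) * p1 k) k"
      using Mz by (rule mult_mat_fun_cong)
    also have "\<dots> = (\<alpha> * r1 + \<beta> * b) * (r1 * p0 k) + (\<beta> * r2) * (b * p0 k + r2 * p1 k)"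
      unfolding mult_mat_fun_lincomb using p0 p1 \<open>k < N\<close> by simp
    also have "\<dots> = (r1 + r2) * ((\<alpha> * r1 + \<beta> * b) * p0 k + (\<beta> * r2) * p1 k)
        - r1 * r2 * (\<alpha> * p0 k + \<beta> * p1 k)"
      by (simp add: algebra_simps)
    also have "\<dots> = (r1 + r2) * mult_mat_fun N A z k - r1 * r2 * z k"
      by (simp add: Mz \<open>k < N\<close> z_def)
    finally show "mult_mat_fun N A (mult_mat_fun N A z) k
        = (r1 + r2) * mult_mat_fun N A z k - r1 * r2 * z k" .
  qed
qed

text \<open>
  For \<open>w = A z\<close>, symmetry gives \<open>|w|\<^sup>2 = \<langle>z, A w\<rangle> = (r1 + r2) \<langle>z, A z\<rangle> - r1 r2 |z|\<^sup>2\<close>,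
  which would be negative for \<open>r1, r2 < 0\<close>.
\<close>

lemma proots_pair_not_both_neg:
  assumes zero_sum: "\<And>x. (\<Sum>i<N. x i) = 0 \<Longrightarrow> quad_form N A x \<ge> 0"
    and sub: "{#r1, r2#} \<subseteq># proots (char_poly AC)"
  shows "Re r1 \<ge> 0 \<or> Re r2 \<ge> 0"
proof (rule ccontr)
  assume "\<not> (Re r1 \<ge> 0 \<or> Re r2 \<ge> 0)"
  then have neg: "Re r1 < 0" "Re r2 < 0"
    by auto
  have "r1 \<in># proots (char_poly AC)" "r2 \<in># proots (char_poly AC)"
    using sub by (auto intro: mset_subset_eqD)
  then have real: "r1 = of_real (Re r1)" "r2 = of_real (Re r2)"
    by (simp_all only: proots_real[symmetric])
  obtain z where nz: "\<exists>k<N. z k \<noteq> 0" and sum0: "(\<Sum>k<N. z k) = 0"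
    and annihilated: "\<And>k. k < N \<Longrightarrow> mult_mat_fun N A (mult_mat_fun N A z) k
        = (r1 + r2) * mult_mat_fun N A z k - r1 * r2 * z k"
    using proots_pair_annihilated[OF sub] by blast
  define w where "w = mult_mat_fun N A z"
  define q where "q = quad_form N A (\<lambda>k. Re (z k)) + quad_form N A (\<lambda>k. Im (z k))"
  have "q \<ge> 0"
    using arg_cong[OF sum0, of Re] arg_cong[OF sum0, of Im]
    unfolding q_def by (intro add_nonneg_nonneg zero_sum) (simp_all add: Re_sum Im_sum)
  have "complex_of_real (\<Sum>k<N. (cmod (w k))\<^sup>2) = (\<Sum>k<N. cnj (w k) * w k)"
    by (rule sum_cnj_mult_self[symmetric])
  also have "\<dots> = (\<Sum>k<N. cnj (z k) * mult_mat_fun N A w k)"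
    unfolding w_def by (rule mult_mat_fun_adjoint[symmetric])
  also have "\<dots> = (\<Sum>k<N. (r1 + r2) * (cnj (z k) * w k) - r1 * r2 * (cnj (z k) * z k))"
    by (intro sum.cong refl) (simp add: annihilated w_def algebra_simps)
  also have "\<dots> = (r1 + r2) * complex_of_real q - r1 * r2 * complex_of_real (\<Sum>k<N. (cmod (z k))\<^sup>2)"
    unfolding q_def w_def
    by (simp add: sum_subtractf sum_cnj_mult_self hermitian_form_eq_quad_form flip: sum_distrib_left)
  also have "\<dots> = complex_of_real ((Re r1 + Re r2) * q - Re r1 * Re r2 * (\<Sum>k<N. (cmod (z k))\<^sup>2))"
    by (simp flip: real)
  finally have "(\<Sum>k<N. (cmod (w k))\<^sup>2) = (Re r1 + Re r2) * q - Re r1 * Re r2 * (\<Sum>k<N. (cmod (z k))\<^sup>2)"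
    by (simp only: of_real_eq_iff)
  moreover have "(Re r1 + Re r2) * q \<le> 0"
    using neg \<open>q \<ge> 0\<close> by (simp add: mult_nonpos_nonneg)
  moreover have "Re r1 * Re r2 * (\<Sum>k<N. (cmod (z k))\<^sup>2) > 0"
    using neg sum_cmod_power2_pos[OF nz] by (simp add: mult_neg_neg)
  moreover have "(\<Sum>k<N. (cmod (w k))\<^sup>2) \<ge> 0"
    by (simp add: sum_nonneg)
  ultimately show False
    by linarith
qed

lemma at_most_one_neg_proot:
  assumes "\<And>x. (\<Sum>i<N. x i) = 0 \<Longrightarrow> quad_form N A x \<ge> 0"
  shows "size (filter_mset (\<lambda>r. Re r < 0) (proots (char_poly AC))) \<le> 1"
proof (rule ccontr)
  define F where "F = filter_mset (\<lambda>r. Re r < 0) (proots (char_poly AC))"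
  assume "\<not> size (filter_mset (\<lambda>r. Re r < 0) (proots (char_poly AC))) \<le> 1"
  then have "size F \<ge> 2"
    by (simp add: F_def)
  then have "F \<noteq> {#}"
    by auto
  then obtain r1 where r1: "r1 \<in># F"
    by (meson multiset_nonemptyE)
  have "size (F - {#r1#}) \<ge> 1"
    using \<open>size F \<ge> 2\<close> r1 by (simp add: size_Diff_submset)
  then have "F - {#r1#} \<noteq> {#}"
    by auto
  then obtain r2 where r2: "r2 \<in># F - {#r1#}"
    by (meson multiset_nonemptyE)
  have "{#r1, r2#} \<subseteq># F"
    using r1 r2 by (simp add: insert_subset_eq_iff)
  then have "{#r1, r2#} \<subseteq># proots (char_poly AC)"
    unfolding F_def using multiset_filter_subset subset_mset.order_trans by blast
  moreover have "Re r1 < 0" "Re r2 < 0"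
    using r1 r2 unfolding F_def by (auto dest: in_diffD)
  ultimately show False
    using proots_pair_not_both_neg[OF assms] by fastforce
qed

lemma sum_cmod_proots_ge:
  assumes diag: "\<And>i. i < N \<Longrightarrow> A $$ (i,i) = 0"
    and nz: "\<exists>i<N. x i \<noteq> 0"
    and eigen: "\<And>i. i < N \<Longrightarrow> (\<Sum>j<N. A $$ (i,j) * x j) = c * x i"
  shows "sum_mset (image_mset cmod (proots (char_poly AC))) \<ge> - 2 * c"
proof -
  define R where "R = proots (char_poly AC)"
  define neg where "neg r = max 0 (- Re r)" for r :: complex
  define v where "v = vec N (\<lambda>i. complex_of_real (x i))"
  have v: "v \<in> carrier_vec N" "v \<noteq> 0\<^sub>v N"
    using nz by (auto simp: v_def vec_eq_iff)
  have "AC *\<^sub>v v = complex_of_real c \<cdot>\<^sub>v v"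
  proof (rule eq_vecI)
    fix i assume "i < dim_vec (complex_of_real c \<cdot>\<^sub>v v)"
    then have "i < N"
      using v by simp
    then have "(AC *\<^sub>v v) $ i = complex_of_real (\<Sum>j<N. A $$ (i,j) * x j)"
      using v by (simp add: mult_mat_vec_AC_nth mult_mat_fun_def v_def)
    then show "(AC *\<^sub>v v) $ i = (complex_of_real c \<cdot>\<^sub>v v) $ i"
      using \<open>i < N\<close> by (simp add: eigen v_def)
  qed (use v carrier in auto)
  then have "eigenvalue AC (complex_of_real c)"
    unfolding eigenvalue_def eigenvector_def using carrier v by auto
  then have "complex_of_real c \<in># R"
    unfolding R_def using char_poly_AC_neq_0 eigenvalue_root_char_poly[OF carrier_AC] by simp
  then obtain R' where "R = add_mset (complex_of_real c) R'"
    by (metis multi_member_split)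
  moreover have "sum_mset (image_mset neg R') \<ge> 0"
    using sum_mset_mono[of R' "\<lambda>_. 0" neg] by (simp add: neg_def)
  ultimately have "sum_mset (image_mset neg R) \<ge> - c"
    by (simp add: neg_def)
  then show ?thesis
    using sum_cmod_proots[OF diag] unfolding R_def neg_def by linarith
qed

lemma sum_cmod_proots_lt:
  assumes diag: "\<And>i. i < N \<Longrightarrow> A $$ (i,i) = 0"
    and gt: "\<And>x. \<exists>i<N. x i \<noteq> 0 \<Longrightarrow> quad_form N A x > c * (\<Sum>i<N. (x i)\<^sup>2)"
    and zero_sum: "\<And>x. (\<Sum>i<N. x i) = 0 \<Longrightarrow> quad_form N A x \<ge> 0"
    and "c < 0"
  shows "sum_mset (image_mset cmod (proots (char_poly AC))) < - 2 * c"
proof -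
  define R where "R = proots (char_poly AC)"
  define neg where "neg r = max 0 (- Re r)" for r :: complex
  define F where "F = filter_mset (\<lambda>r. Re r < 0) R"
  have neg_F: "sum_mset (image_mset neg R) = sum_mset (image_mset neg F)"
    unfolding F_def by (induction R) (auto simp: neg_def)
  have "size F \<le> 1"
    unfolding F_def R_def by (rule at_most_one_neg_proot[OF zero_sum])
  have "sum_mset (image_mset neg F) < - c"
  proof (cases "size F = 0")
    case True
    then show ?thesis using \<open>c < 0\<close> by simp
  next
    case False
    then have "size F = 1"
      using \<open>size F \<le> 1\<close> by linarith
    then obtain r where r: "F = {#r#}"
      using size_1_singleton_mset by blast
    then have "r \<in># R" "Re r < 0"
      using union_single_eq_member[of r "{#}"] unfolding F_def by (metis mem_Collect_eq set_mset_filter)+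
    moreover have "Re r > c"
      using \<open>r \<in># R\<close> gt unfolding R_def by (rule proots_gt)
    ultimately show ?thesis
      using r by (simp add: neg_def)
  qed
  then show ?thesis
    using sum_cmod_proots[OF diag] neg_F unfolding R_def neg_def by linarith
qed

end

end

section \<open>Sylvester's criterion for small symmetric matrices\<close>

lemma quad_sym2_pos:
  fixes a b c x y :: real
  assumes "a > 0" "a * c - b\<^sup>2 > 0" "x \<noteq> 0 \<or> y \<noteq> 0"
  shows "a * x\<^sup>2 + 2 * b * x * y + c * y\<^sup>2 > 0"
proof -
  have sq: "a * (a * x\<^sup>2 + 2 * b * x * y + c * y\<^sup>2) = (a * x + b * y)\<^sup>2 + (a * c - b\<^sup>2) * y\<^sup>2"
    by (simp add: algebra_simps power2_eq_square)
  have "a * (a * x\<^sup>2 + 2 * b * x * y + c * y\<^sup>2) > 0"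
  proof (cases "y = 0")
    case True
    then show ?thesis unfolding sq using assms by simp
  next
    case False
    then show ?thesis unfolding sq using assms(2) by (simp add: add_nonneg_pos)
  qed
  then show ?thesis
    using assms(1) by (simp add: zero_less_mult_iff)
qed

definition det_sym3 :: "real \<Rightarrow> real \<Rightarrow> real \<Rightarrow> real \<Rightarrow> real \<Rightarrow> real \<Rightarrow> real" where
  "det_sym3 a11 a12 a13 a22 a23 a33 =
     a11 * (a22 * a33 - a23\<^sup>2) - a12 * (a12 * a33 - a23 * a13) + a13 * (a12 * a23 - a22 * a13)"

definition quad_sym3 :: "real \<Rightarrow> real \<Rightarrow> real \<Rightarrow> real \<Rightarrow> real \<Rightarrow> real \<Rightarrow> real \<Rightarrow> real \<Rightarrow> real \<Rightarrow> real"
  where "quad_sym3 a11 a12 a13 a22 a23 a33 x1 x2 x3 =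
     a11 * x1\<^sup>2 + a22 * x2\<^sup>2 + a33 * x3\<^sup>2 + 2 * a12 * x1 * x2 + 2 * a13 * x1 * x3 + 2 * a23 * x2 * x3"

lemma quad_sym3_pos:
  assumes "a11 > 0" "a11 * a22 - a12\<^sup>2 > 0" "det_sym3 a11 a12 a13 a22 a23 a33 > 0"
    and "x1 \<noteq> 0 \<or> x2 \<noteq> 0 \<or> x3 \<noteq> 0"
  shows "quad_sym3 a11 a12 a13 a22 a23 a33 x1 x2 x3 > 0"
proof -
  define h22 h23 h33 where "h22 = a11 * a22 - a12\<^sup>2" and "h23 = a11 * a23 - a12 * a13"
    and "h33 = a11 * a33 - a13\<^sup>2"
  have sq: "a11 * quad_sym3 a11 a12 a13 a22 a23 a33 x1 x2 x3
      = (a11 * x1 + a12 * x2 + a13 * x3)\<^sup>2 + (h22 * x2\<^sup>2 + 2 * h23 * x2 * x3 + h33 * x3\<^sup>2)"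
    unfolding quad_sym3_def h22_def h23_def h33_def by (simp add: algebra_simps power2_eq_square)
  have schur: "h22 * h33 - h23\<^sup>2 = a11 * det_sym3 a11 a12 a13 a22 a23 a33"
    unfolding det_sym3_def h22_def h23_def h33_def by (simp add: algebra_simps power2_eq_square)
  have "a11 * quad_sym3 a11 a12 a13 a22 a23 a33 x1 x2 x3 > 0"
  proof (cases "x2 = 0 \<and> x3 = 0")
    case True
    then show ?thesis unfolding sq using assms by simp
  next
    case False
    have "h22 > 0"
      using assms(2) by (simp add: h22_def)
    moreover have "h22 * h33 - h23\<^sup>2 > 0"
      using assms(1,3) by (simp add: schur)
    ultimately have "h22 * x2\<^sup>2 + 2 * h23 * x2 * x3 + h33 * x3\<^sup>2 > 0"
      using False by (intro quad_sym2_pos) auto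
    then show ?thesis unfolding sq by (simp add: add_nonneg_pos)
  qed
  then show ?thesis
    using assms(1) by (simp add: zero_less_mult_iff)
qed

definition det_sym4 :: "real \<Rightarrow> real \<Rightarrow> real \<Rightarrow> real \<Rightarrow> real \<Rightarrow> real \<Rightarrow> real \<Rightarrow> real \<Rightarrow> real \<Rightarrow> real \<Rightarrow> real"
  where "det_sym4 a11 a12 a13 a14 a22 a23 a24 a33 a34 a44 =
     a11 * det_sym3 a22 a23 a24 a33 a34 a44
   - a12 * (a12 * (a33 * a44 - a34\<^sup>2) - a23 * (a13 * a44 - a34 * a14) + a24 * (a13 * a34 - a33 * a14))
   + a13 * (a12 * (a23 * a44 - a24 * a34) - a22 * (a13 * a44 - a14 * a34) + a24 * (a13 * a24 - a23 * a14))
   - a14 * (a12 * (a23 * a34 - a24 * a33) - a22 * (a13 * a34 - a14 * a33) + a23 * (a13 * a24 - a14 * a23))"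

definition quad_sym4 :: "real \<Rightarrow> real \<Rightarrow> real \<Rightarrow> real \<Rightarrow> real \<Rightarrow> real \<Rightarrow> real \<Rightarrow> real \<Rightarrow> real \<Rightarrow> real \<Rightarrow>
    real \<Rightarrow> real \<Rightarrow> real \<Rightarrow> real \<Rightarrow> real"
  where "quad_sym4 a11 a12 a13 a14 a22 a23 a24 a33 a34 a44 x1 x2 x3 x4 =
     a11 * x1\<^sup>2 + a22 * x2\<^sup>2 + a33 * x3\<^sup>2 + a44 * x4\<^sup>2 + 2 * a12 * x1 * x2 + 2 * a13 * x1 * x3
     + 2 * a14 * x1 * x4 + 2 * a23 * x2 * x3 + 2 * a24 * x2 * x4 + 2 * a34 * x3 * x4"

lemma quad_sym4_pos:
  assumes "a11 > 0" "a11 * a22 - a12\<^sup>2 > 0" "det_sym3 a11 a12 a13 a22 a23 a33 > 0"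
    "det_sym4 a11 a12 a13 a14 a22 a23 a24 a33 a34 a44 > 0"
    and "x1 \<noteq> 0 \<or> x2 \<noteq> 0 \<or> x3 \<noteq> 0 \<or> x4 \<noteq> 0"
  shows "quad_sym4 a11 a12 a13 a14 a22 a23 a24 a33 a34 a44 x1 x2 x3 x4 > 0"
proof -
  define h22 h23 h24 h33 h34 h44 where "h22 = a11 * a22 - a12\<^sup>2" and "h23 = a11 * a23 - a12 * a13"
    and "h24 = a11 * a24 - a12 * a14" and "h33 = a11 * a33 - a13\<^sup>2"
    and "h34 = a11 * a34 - a13 * a14" and "h44 = a11 * a44 - a14\<^sup>2"
  have sq: "a11 * quad_sym4 a11 a12 a13 a14 a22 a23 a24 a33 a34 a44 x1 x2 x3 x4
      = (a11 * x1 + a12 * x2 + a13 * x3 + a14 * x4)\<^sup>2 + quad_sym3 h22 h23 h24 h33 h34 h44 x2 x3 x4"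
    unfolding quad_sym4_def quad_sym3_def h22_def h23_def h24_def h33_def h34_def h44_def
    by (simp add: algebra_simps power2_eq_square)
  have schur2: "h22 * h33 - h23\<^sup>2 = a11 * det_sym3 a11 a12 a13 a22 a23 a33"
    unfolding det_sym3_def h22_def h23_def h33_def by (simp add: algebra_simps power2_eq_square)
  have schur3: "det_sym3 h22 h23 h24 h33 h34 h44 = a11\<^sup>2 * det_sym4 a11 a12 a13 a14 a22 a23 a24 a33 a34 a44"
    unfolding det_sym3_def det_sym4_def h22_def h23_def h24_def h33_def h34_def h44_def
    by (simp add: algebra_simps power2_eq_square)
  have "a11 * quad_sym4 a11 a12 a13 a14 a22 a23 a24 a33 a34 a44 x1 x2 x3 x4 > 0"
  proof (cases "x2 = 0 \<and> x3 = 0 \<and> x4 = 0")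
    case True
    then show ?thesis unfolding sq quad_sym3_def using assms by simp
  next
    case False
    have "h22 > 0"
      using assms(2) by (simp add: h22_def)
    moreover have "h22 * h33 - h23\<^sup>2 > 0"
      using assms(1,3) by (simp add: schur2)
    moreover have "det_sym3 h22 h23 h24 h33 h34 h44 > 0"
      using assms(1,4) by (simp add: schur3)
    ultimately have "quad_sym3 h22 h23 h24 h33 h34 h44 x2 x3 x4 > 0"
      using False by (intro quad_sym3_pos) auto
    then show ?thesis unfolding sq by (simp add: add_nonneg_pos)
  qed
  then show ?thesis
    using assms(1) by (simp add: zero_less_mult_iff)
qed

section \<open>Two inequalities for a reduced quadratic form\<close>

text \<open>
  The quotient matrix of the Seidel matrix of \<open>C\<^sup>3\<^sub>m\<^sub>,\<^sub>n\<close> for the partition \<open>{V\<^sub>1, V\<^sub>2}\<close> is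
  \<open>[[(m - 1)(1 - 2n), n(5 - 2m - 2n)], [m(5 - 2m - 2n), (n - 1)(1 - 2m)]]\<close>;
  \<open>quot_eig\<close> is its smaller eigenvalue.
\<close>

definition quot_trace :: "real \<Rightarrow> real \<Rightarrow> real" where
  "quot_trace m n = (m - 1) * (1 - 2 * n) + (n - 1) * (1 - 2 * m)"

definition quot_det :: "real \<Rightarrow> real \<Rightarrow> real" where
  "quot_det m n = (m - 1) * (1 - 2 * n) * ((n - 1) * (1 - 2 * m)) - m * n * (5 - 2 * m - 2 * n)\<^sup>2"

definition quot_eig :: "real \<Rightarrow> real \<Rightarrow> real" where
  "quot_eig m n = (quot_trace m n - sqrt ((quot_trace m n)\<^sup>2 - 4 * quot_det m n)) / 2"

lemma quot_discriminant:
  "(quot_trace m n)\<^sup>2 - 4 * quot_det m n = (n - m)\<^sup>2 + 4 * m * n * (5 - 2 * m - 2 * n)\<^sup>2"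
  \<comment> \<open>qualified because HOL-Algebra, imported by Jordan_Normal_Form, redefines \<open>algebra\<close>\<close>
  unfolding quot_trace_def quot_det_def by Groebner_Basis.algebra

lemma quot_eig_root:
  fixes m n :: real
  assumes "m \<ge> 0" "n \<ge> 0"
  shows "(quot_eig m n)\<^sup>2 - quot_trace m n * quot_eig m n + quot_det m n = 0"
proof -
  define r where "r = sqrt ((quot_trace m n)\<^sup>2 - 4 * quot_det m n)"
  have "r\<^sup>2 = (quot_trace m n)\<^sup>2 - 4 * quot_det m n"
    unfolding r_def quot_discriminant using assms by simp
  then show ?thesis
    unfolding quot_eig_def r_def[symmetric] by (simp add: field_simps power2_eq_square)
qed

lemma quot_eig_neg:
  fixes m n :: real
  assumes "m \<ge> 3" "n \<ge> 3"
  shows "quot_eig m n < 0"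
proof -
  have "(m - 1) * (1 - 2 * n) < 0" "(n - 1) * (1 - 2 * m) < 0"
    using assms by (simp_all add: mult_pos_neg)
  then have "quot_trace m n < 0"
    by (simp add: quot_trace_def)
  moreover have "sqrt ((quot_trace m n)\<^sup>2 - 4 * quot_det m n) \<ge> 0"
    using assms by (simp add: quot_discriminant)
  ultimately have "quot_trace m n - sqrt ((quot_trace m n)\<^sup>2 - 4 * quot_det m n) < 0"
    by linarith
  then show ?thesis
    unfolding quot_eig_def by simp
qed

lemma quot_eig_swap: "quot_eig m n = quot_eig n m"
proof -
  have "quot_trace m n = quot_trace n m" "quot_det m n = quot_det n m"
    unfolding quot_trace_def quot_det_def by Groebner_Basis.algebra+
  then show ?thesis
    by (simp add: quot_eig_def)
qed

text \<open>
  The value of \<open>x\<^sup>T S x\<close> for the Seidel matrix \<open>S\<close> of \<open>C\<^sup>3\<^sub>m\<^sub>,\<^sub>n - e\<close>, where \<open>s\<^sub>K\<close> and \<open>t\<^sub>K\<close> are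
  the sum and the sum of squares of \<open>x\<close> over the cells \<open>V\<^sub>1 - e\<close>, \<open>V\<^sub>1 \<inter> e\<close>, \<open>V\<^sub>2 \<inter> e\<close>,
  \<open>V\<^sub>2 - e\<close> (see \<open>quad_form_seidel_minus_edge\<close>).
\<close>

definition reduced_form :: "real \<Rightarrow> real \<Rightarrow> real \<Rightarrow> real \<Rightarrow> real \<Rightarrow> real \<Rightarrow>
    real \<Rightarrow> real \<Rightarrow> real \<Rightarrow> real \<Rightarrow> real" where
  "reduced_form m n s0 s1 s2 s3 t0 t1 t2 t3 =
     (1 - 2 * n) * ((s0 + s1)\<^sup>2 - t0 - t1) + (1 - 2 * m) * ((s2 + s3)\<^sup>2 - t2 - t3)
     + 2 * (5 - 2 * m - 2 * n) * (s0 + s1) * (s2 + s3) + 2 * ((s1 + s2)\<^sup>2 - t1 - t2)"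

lemma reduced_form_swap:
  "reduced_form m n s0 s1 s2 s3 t0 t1 t2 t3 = reduced_form n m s3 s2 s1 s0 t3 t2 t1 t0"
  unfolding reduced_form_def by Groebner_Basis.algebra

text \<open>
  The form \<open>x\<^sup>T (S - c I) x\<close> for \<open>x\<close> constant on the cells, of sizes \<open>m - 2, 2, 1, n - 1\<close>;
  the variables are listed in the order \<open>y2, y1, y0, y3\<close>, for which all leading minors are
  positive.
\<close>

definition cell_const_form :: "real \<Rightarrow> real \<Rightarrow> real \<Rightarrow> real \<Rightarrow> real \<Rightarrow> real \<Rightarrow> real \<Rightarrow> real" where
  "cell_const_form m n c y0 y1 y2 y3 = quad_sym4
     (-c) (-4*n - 4*m + 14) (-2*m*n - 2*m^2 + 4*n + 9*m - 10) (-2*m*n + n + 2*m - 1)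
     (-2*c - 4*n + 6) (-4*m*n + 8*n + 2*m - 4) (-4*n^2 - 4*m*n + 14*n + 4*m - 10)
     (-2*m^2*n - m*c + 10*m*n + m^2 + 2*c - 12*n - 5*m + 6)
     (-2*m*n^2 - 2*m^2*n + 4*n^2 + 11*m*n + 2*m^2 - 14*n - 9*m + 10)
     (-2*m*n^2 - n*c + n^2 + 6*m*n + c - 3*n - 4*m + 2)
     y2 y1 y0 y3"

lemma reduced_form_eq_cell_const_form:
  fixes m n c y0 y1 y2 y3 d0 d1 d2 d3 :: real
  shows "reduced_form m n ((m - 2) * y0) (2 * y1) y2 ((n - 1) * y3)
      ((m - 2) * y0\<^sup>2 + d0) (2 * y1\<^sup>2 + d1) (y2\<^sup>2 + d2) ((n - 1) * y3\<^sup>2 + d3)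
    - c * (((m - 2) * y0\<^sup>2 + d0) + (2 * y1\<^sup>2 + d1) + (y2\<^sup>2 + d2) + ((n - 1) * y3\<^sup>2 + d3))
    = cell_const_form m n c y0 y1 y2 y3
      + (2 * n - 1 - c) * d0 + (2 * n - 3 - c) * d1 + (2 * m - 3 - c) * d2 + (2 * m - 1 - c) * d3"
  unfolding reduced_form_def cell_const_form_def quad_sym4_def by Groebner_Basis.algebra

text \<open>
  Each leading minor is reduced, modulo the quadratic equation of \<open>c\<close>, to
  \<open>A(m - 3, n - 3) + B(m - 3, n - 3) (-c)\<close> with polynomials \<open>A\<close>, \<open>B\<close> with nonnegative
  coefficients.
\<close>

lemma cell_const_form_minor2_pos:
  fixes m n c :: real
  assumes "m \<ge> 3" "n \<ge> 3" "c < 0" and root: "c\<^sup>2 - quot_trace m n * c + quot_det m n = 0"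
  shows "0 < (-c) * (-2*c - 4*n + 6) - (-4*n - 4*m + 14)\<^sup>2"
    (is "0 < ?minor")
proof -
  define x y where "x = m - 3" and "y = n - 3"
  have "0 \<le> x" "0 \<le> y" "0 \<le> -c"
    using assms by (simp_all add: x_def y_def)
  have "?minor = (582 + 538*x + 538*y + 184*x^2 + 184*y^2 + 384*x*y + 92*x^2*y + 92*x*y^2 + 24*x^3
      + 24*y^3 + 8*x^2*y^2 + 8*x^3*y + 8*x*y^3)
      + (34 + 14*y + 18*x + 8*x*y) * (-c)
      + 2 * (c\<^sup>2 - quot_trace m n * c + quot_det m n)"
    (is "_ = ?certificate + _")
    unfolding x_def y_def quot_trace_def quot_det_def by Groebner_Basis.algebra
  moreover have "0 < ?certificate"
    using \<open>0 \<le> x\<close> \<open>0 \<le> y\<close> \<open>0 \<le> -c\<close>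
    by (intro add_pos_nonneg add_nonneg_nonneg mult_nonneg_nonneg zero_le_power) auto
  ultimately show ?thesis
    by (simp add: root)
qed

lemma cell_const_form_minor3_pos:
  fixes m n c :: real
  assumes "m \<ge> 3" "n \<ge> 3" "c < 0" and root: "c\<^sup>2 - quot_trace m n * c + quot_det m n = 0"
  shows "0 < det_sym3
      (-c) (-4*n - 4*m + 14) (-2*m*n - 2*m^2 + 4*n + 9*m - 10)
      (-2*c - 4*n + 6) (-4*m*n + 8*n + 2*m - 4)
      (-2*m^2*n - m*c + 10*m*n + m^2 + 2*c - 12*n - 5*m + 6)"
    (is "0 < ?minor")
proof -
  define x y where "x = m - 3" and "y = n - 3"
  have "0 \<le> x" "0 \<le> y" "0 \<le> -c"
    using assms by (simp_all add: x_def y_def)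
  have "?minor = (10488 + 22324*x + 14124*y + 17180*x^2 + 28258*x*y + 7318*y^2 + 6496*x^3 + 19726*x^2*y
      + 13566*x*y^2 + 1760*y^3 + 6648*x^3*y + 8196*x^2*y^2 + 3020*x*y^3 + 1248*x^4 + 168*y^4
      + 1136*x^4*y + 2220*x^3*y^2 + 1532*x^2*y^3 + 272*x*y^4 + 96*x^5 + 288*x^3*y^3
      + 288*x^4*y^2 + 120*x^2*y^4 + 80*x^5*y + 16*x^4*y^3 + 16*x^5*y^2 + 16*x^3*y^4)
      + (1064 + 1844*x + 988*y + 972*x^2 + 1666*x*y + 286*y^2 + 822*x^2*y + 454*x*y^2 + 208*x^3
      + 24*y^3 + 192*x^2*y^2 + 16*x^4 + 152*x^3*y + 32*x*y^3 + 24*x^3*y^2 + 8*x^4*y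
      + 8*x^2*y^3) * (-c)
      + (4*m^2*n - 2*m*c - 6*m*n - 4*m^2 + 4*c - 4*n + 12*m - 8)
        * (c\<^sup>2 - quot_trace m n * c + quot_det m n)"
    (is "_ = ?certificate + _")
    unfolding x_def y_def det_sym3_def quot_trace_def quot_det_def by Groebner_Basis.algebra
  moreover have "0 < ?certificate"
    using \<open>0 \<le> x\<close> \<open>0 \<le> y\<close> \<open>0 \<le> -c\<close>
    by (intro add_pos_nonneg add_nonneg_nonneg mult_nonneg_nonneg zero_le_power) auto
  ultimately show ?thesis
    by (simp add: root)
qed

lemma cell_const_form_minor4_pos:
  fixes m n c :: real
  assumes "m \<ge> 3" "n \<ge> 3" "c < 0" and root: "c\<^sup>2 - quot_trace m n * c + quot_det m n = 0"
  shows "0 < det_sym4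
      (-c) (-4*n - 4*m + 14) (-2*m*n - 2*m^2 + 4*n + 9*m - 10) (-2*m*n + n + 2*m - 1)
      (-2*c - 4*n + 6) (-4*m*n + 8*n + 2*m - 4) (-4*n^2 - 4*m*n + 14*n + 4*m - 10)
      (-2*m^2*n - m*c + 10*m*n + m^2 + 2*c - 12*n - 5*m + 6)
      (-2*m*n^2 - 2*m^2*n + 4*n^2 + 11*m*n + 2*m^2 - 14*n - 9*m + 10)
      (-2*m*n^2 - n*c + n^2 + 6*m*n + c - 3*n - 4*m + 2)"
    (is "0 < ?minor")
proof -
  define x y where "x = m - 3" and "y = n - 3"
  have "0 \<le> x" "0 \<le> y" "0 \<le> -c"
    using assms by (simp_all add: x_def y_def)
  have "?minor = (109248 + 231312*x + 185648*y + 174416*x^2 + 364056*x*y + 126568*y^2 + 62656*x^3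
      + 242760*x^2*y + 226760*x*y^2 + 43840*y^3 + 11072*x^4 + 74944*x^3*y + 127984*x^2*y^2
      + 71120*x*y^3 + 7808*y^4 + 768*x^5 + 11232*x^4*y + 31152*x^3*y^2 + 32272*x^2*y^3
      + 11456*x*y^4 + 576*y^5 + 640*x^5*y + 3488*x^4*y^2 + 5312*x^3*y^3 + 3968*x^2*y^4
      + 768*x*y^5 + 128*x^5*y^2 + 320*x^4*y^3 + 320*x^3*y^4 + 192*x^2*y^5)
      + (9792 + 16016*x + 12080*y + 7120*x^2 + 18712*x*y + 5064*y^2 + 7400*x^2*y + 7272*x*y^2
      + 800*y^3 + 896*x^3 + 2368*x^2*y^2 + 1024*x*y^3 + 768*x^3*y + 32*y^4 + 224*x^2*y^3
      + 160*x^3*y^2 + 32*x*y^4) * (-c)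
      + (2*m*n*c^2 - 4*m*n^2*c - 4*m^2*n*c + 8*m^2*n^2 - 4*n*c^2 + 8*n^2*c - 2*m*c^2 + 12*m*n*c
         + 28*m*n^2 + 4*m^2*c + 28*m^2*n + 4*c^2 - 8*n*c - 88*n^2 - 8*m*c - 206*m*n - 36*m^2
         + 300*n + 178*m - 212) * (c\<^sup>2 - quot_trace m n * c + quot_det m n)"
    (is "_ = ?certificate + _")
    unfolding x_def y_def det_sym4_def det_sym3_def quot_trace_def quot_det_def by Groebner_Basis.algebra
  moreover have "0 < ?certificate"
    using \<open>0 \<le> x\<close> \<open>0 \<le> y\<close> \<open>0 \<le> -c\<close>
    by (intro add_pos_nonneg add_nonneg_nonneg mult_nonneg_nonneg zero_le_power) auto
  ultimately show ?thesis
    by (simp add: root)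
qed

lemma cell_const_form_pos:
  fixes m n y0 y1 y2 y3 :: real
  assumes "m \<ge> 3" "n \<ge> 3" "y0 \<noteq> 0 \<or> y1 \<noteq> 0 \<or> y2 \<noteq> 0 \<or> y3 \<noteq> 0"
  shows "cell_const_form m n (quot_eig m n) y0 y1 y2 y3 > 0"
proof -
  have "quot_eig m n < 0" and root: "(quot_eig m n)\<^sup>2 - quot_trace m n * quot_eig m n + quot_det m n = 0"
    using assms by (simp_all add: quot_eig_neg quot_eig_root)
  then show ?thesis
    unfolding cell_const_form_def using assms
    by (intro quad_sym4_pos cell_const_form_minor2_pos cell_const_form_minor3_pos
        cell_const_form_minor4_pos) auto
qed

lemma cell_const_form_nonneg:
  fixes m n y0 y1 y2 y3 :: real
  assumes "m \<ge> 3" "n \<ge> 3"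
  shows "cell_const_form m n (quot_eig m n) y0 y1 y2 y3 \<ge> 0"
  using cell_const_form_pos[OF assms, of y0 y1 y2 y3]
  by (cases "y0 \<noteq> 0 \<or> y1 \<noteq> 0 \<or> y2 \<noteq> 0 \<or> y3 \<noteq> 0") (auto simp: cell_const_form_def quad_sym4_def)

lemma cell_const_form_zero_sum_nonneg:
  fixes m n y0 y1 y3 :: real
  assumes "m \<ge> 3" "n \<ge> 3"
  shows "cell_const_form m n 0 y0 y1 (- ((m - 2) * y0 + 2 * y1 + (n - 1) * y3)) y3 \<ge> 0"
proof -
  define x y where "x = m - 3" and "y = n - 3"
  have "0 \<le> x" "0 \<le> y"
    using assms by (simp_all add: x_def y_def)
  define r11 r12 r13 r22 r23 r33 where "r11 = 12*n + 16*m - 50"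
    and "r12 = 4*m*n + 8*m^2 - 8*n - 38*m + 44" and "r13 = 4*m*n - 6*n - 4*m + 6"
    and "r22 = 2*m^2*n + 4*m^3 - 6*m*n - 25*m^2 + 4*n + 51*m - 34"
    and "r23 = 2*m^2*n - 5*m*n - 2*m^2 + 2*n + 5*m - 2" and "r33 = 2*m*n^2 - n^2 - 2*m*n + n"
  note r_defs = r11_def r12_def r13_def r22_def r23_def r33_def
  have reduce: "cell_const_form m n 0 y0 y1 (- ((m - 2) * y0 + 2 * y1 + (n - 1) * y3)) y3
      = quad_sym3 r11 r12 r13 r22 r23 r33 y1 y0 y3"
    unfolding cell_const_form_def quad_sym4_def quad_sym3_def r_defs by Groebner_Basis.algebra
  have "r11 = 34 + 16*x + 12*y"
    unfolding r_defs x_def y_def by Groebner_Basis.algebra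
  moreover have "r11 * r22 - r12\<^sup>2 = 280 + 526*x + 192*y + 304*x*y + 32*y^2 + 302*x^2 + 40*x*y^2
      + 128*x^2*y + 56*x^3 + 16*x^3*y + 8*x^2*y^2"
    unfolding r_defs x_def y_def by Groebner_Basis.algebra
  moreover have "det_sym3 r11 r12 r13 r22 r23 r33 = 6344 + 13668*x + 9888*y + 10292*x^2 + 19854*x*y
      + 5830*y^2 + 13474*x^2*y + 10878*x*y^2 + 1556*y^3 + 3416*x^3 + 6508*x^2*y^2 + 2712*x*y^3
      + 160*y^4 + 3972*x^3*y + 448*x^4 + 1412*x^2*y^3 + 264*x*y^4 + 1612*x^3*y^2 + 464*x^4*y
      + 120*x^2*y^4 + 272*x^3*y^3 + 152*x^4*y^2 + 16*x^4*y^3 + 16*x^3*y^4"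
    unfolding det_sym3_def r_defs x_def y_def by Groebner_Basis.algebra
  ultimately have minors: "r11 > 0" "r11 * r22 - r12\<^sup>2 > 0" "det_sym3 r11 r12 r13 r22 r23 r33 > 0"
    using \<open>0 \<le> x\<close> \<open>0 \<le> y\<close>
    by (simp_all only:) (intro add_pos_nonneg add_nonneg_nonneg mult_nonneg_nonneg zero_le_power; simp)+
  show ?thesis
    unfolding reduce
    using quad_sym3_pos[OF minors, of y1 y0 y3]
    by (cases "y1 \<noteq> 0 \<or> y0 \<noteq> 0 \<or> y3 \<noteq> 0") (auto simp: quad_sym3_def)
qed

lemma square_le_mult_decomp:
  fixes k s t :: real
  assumes "k > 0" "s\<^sup>2 \<le> k * t"
  obtains y d where "s = k * y" "t = k * y\<^sup>2 + d" "d \<ge> 0"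
proof
  show "s = k * (s / k)"
    using assms(1) by simp
  show "t = k * (s / k)\<^sup>2 + (t - k * (s / k)\<^sup>2)"
    by simp
  show "t - k * (s / k)\<^sup>2 \<ge> 0"
    using assms by (simp add: power_divide power2_eq_square field_simps)
qed

lemma reduced_form_gt:
  fixes m n s0 s1 s2 s3 t0 t1 t2 t3 :: real
  assumes mn: "m \<ge> 3" "n \<ge> 3"
    and cs: "s0\<^sup>2 \<le> (m - 2) * t0" "s1\<^sup>2 \<le> 2 * t1" "s2\<^sup>2 \<le> t2" "s3\<^sup>2 \<le> (n - 1) * t3"
    and pos: "t0 + t1 + t2 + t3 > 0"
  shows "reduced_form m n s0 s1 s2 s3 t0 t1 t2 t3 > quot_eig m n * (t0 + t1 + t2 + t3)"
proof -
  define c where "c = quot_eig m n"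
  have "c < 0"
    unfolding c_def using mn by (rule quot_eig_neg)
  obtain y0 d0 where y0: "s0 = (m - 2) * y0" "t0 = (m - 2) * y0\<^sup>2 + d0" "d0 \<ge> 0"
    using square_le_mult_decomp[of "m - 2" s0 t0] mn cs(1) by auto
  obtain y1 d1 where y1: "s1 = 2 * y1" "t1 = 2 * y1\<^sup>2 + d1" "d1 \<ge> 0"
    using square_le_mult_decomp[of 2 s1 t1] cs(2) by auto
  obtain y2 d2 where y2: "s2 = y2" "t2 = y2\<^sup>2 + d2" "d2 \<ge> 0"
    using square_le_mult_decomp[of 1 s2 t2] cs(3) by auto
  obtain y3 d3 where y3: "s3 = (n - 1) * y3" "t3 = (n - 1) * y3\<^sup>2 + d3" "d3 \<ge> 0"
    using square_le_mult_decomp[of "n - 1" s3 t3] mn cs(4) by auto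
  have eq: "reduced_form m n s0 s1 s2 s3 t0 t1 t2 t3 - c * (t0 + t1 + t2 + t3)
      = cell_const_form m n c y0 y1 y2 y3
        + (2 * n - 1 - c) * d0 + (2 * n - 3 - c) * d1 + (2 * m - 3 - c) * d2 + (2 * m - 1 - c) * d3"
    unfolding y0(1,2) y1(1,2) y2(1,2) y3(1,2) by (rule reduced_form_eq_cell_const_form)
  have weights: "(2 * n - 1 - c) * d0 \<ge> 0" "(2 * n - 3 - c) * d1 \<ge> 0"
      "(2 * m - 3 - c) * d2 \<ge> 0" "(2 * m - 1 - c) * d3 \<ge> 0"
    using mn \<open>c < 0\<close> y0(3) y1(3) y2(3) y3(3) by simp_all
  have "cell_const_form m n c y0 y1 y2 y3
      + (2 * n - 1 - c) * d0 + (2 * n - 3 - c) * d1 + (2 * m - 3 - c) * d2 + (2 * m - 1 - c) * d3 > 0"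
  proof (cases "d0 = 0 \<and> d1 = 0 \<and> d2 = 0 \<and> d3 = 0")
    case True
    then have "y0 \<noteq> 0 \<or> y1 \<noteq> 0 \<or> y2 \<noteq> 0 \<or> y3 \<noteq> 0"
      using pos y0(2) y1(2) y2(2) y3(2) by auto
    then have "cell_const_form m n c y0 y1 y2 y3 > 0"
      unfolding c_def using mn by (intro cell_const_form_pos)
    then show ?thesis
      using True by simp
  next
    case False
    then have "(2 * n - 1 - c) * d0 > 0 \<or> (2 * n - 3 - c) * d1 > 0
        \<or> (2 * m - 3 - c) * d2 > 0 \<or> (2 * m - 1 - c) * d3 > 0"
      using mn \<open>c < 0\<close> y0(3) y1(3) y2(3) y3(3) by auto
    moreover have "cell_const_form m n c y0 y1 y2 y3 \<ge> 0"
      unfolding c_def using mn by (rule cell_const_form_nonneg)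
    ultimately show ?thesis
      using weights by linarith
  qed
  then show ?thesis
    using eq unfolding c_def by linarith
qed

lemma reduced_form_nonneg:
  fixes m n s0 s1 s2 s3 t0 t1 t2 t3 :: real
  assumes mn: "m \<ge> 3" "n \<ge> 3"
    and cs: "s0\<^sup>2 \<le> (m - 2) * t0" "s1\<^sup>2 \<le> 2 * t1" "s2\<^sup>2 \<le> t2" "s3\<^sup>2 \<le> (n - 1) * t3"
    and sum: "s0 + s1 + s2 + s3 = 0"
  shows "reduced_form m n s0 s1 s2 s3 t0 t1 t2 t3 \<ge> 0"
proof -
  obtain y0 d0 where y0: "s0 = (m - 2) * y0" "t0 = (m - 2) * y0\<^sup>2 + d0" "d0 \<ge> 0"
    using square_le_mult_decomp[of "m - 2" s0 t0] mn cs(1) by auto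
  obtain y1 d1 where y1: "s1 = 2 * y1" "t1 = 2 * y1\<^sup>2 + d1" "d1 \<ge> 0"
    using square_le_mult_decomp[of 2 s1 t1] cs(2) by auto
  obtain y2 d2 where y2: "s2 = y2" "t2 = y2\<^sup>2 + d2" "d2 \<ge> 0"
    using square_le_mult_decomp[of 1 s2 t2] cs(3) by auto
  obtain y3 d3 where y3: "s3 = (n - 1) * y3" "t3 = (n - 1) * y3\<^sup>2 + d3" "d3 \<ge> 0"
    using square_le_mult_decomp[of "n - 1" s3 t3] mn cs(4) by auto
  have "reduced_form m n s0 s1 s2 s3 t0 t1 t2 t3 - 0 * (t0 + t1 + t2 + t3)
      = cell_const_form m n 0 y0 y1 y2 y3
        + (2 * n - 1 - 0) * d0 + (2 * n - 3 - 0) * d1 + (2 * m - 3 - 0) * d2 + (2 * m - 1 - 0) * d3"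
    unfolding y0(1,2) y1(1,2) y2(1,2) y3(1,2) by (rule reduced_form_eq_cell_const_form)
  moreover have "y2 = - ((m - 2) * y0 + 2 * y1 + (n - 1) * y3)"
    using sum y0(1) y1(1) y2(1) y3(1) by linarith
  then have "cell_const_form m n 0 y0 y1 y2 y3 \<ge> 0"
    using cell_const_form_zero_sum_nonneg[OF mn] by simp
  ultimately show ?thesis
    using mn y0(3) y1(3) y2(3) y3(3) by simp
qed

section \<open>The Seidel matrices of \<open>C\<^sup>3\<^sub>m\<^sub>,\<^sub>n\<close> and \<open>C\<^sup>3\<^sub>m\<^sub>,\<^sub>n - e\<close>\<close>

lemma seidel_matrix_carrier: "seidel_matrix N E \<in> carrier_mat N N"
  by (simp add: seidel_matrix_def)

lemma seidel_matrix_diag: "i < N \<Longrightarrow> seidel_matrix N E $$ (i,i) = 0"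
  by (simp add: seidel_matrix_def)

lemma seidel_matrix_off_diag:
  "i < N \<Longrightarrow> j < N \<Longrightarrow> i \<noteq> j \<Longrightarrow> seidel_matrix N E $$ (i,j) = 1 - 2 * real (codegree E i j)"
  by (simp add: seidel_matrix_def)

lemma seidel_matrix_symmetric:
  "i < N \<Longrightarrow> j < N \<Longrightarrow> seidel_matrix N E $$ (i,j) = seidel_matrix N E $$ (j,i)"
  by (simp add: seidel_matrix_def codegree_def conj_commute)

lemma codegree_remove_edge:
  assumes "finite E" "e \<in> E"
  shows "real (codegree (E - {e}) i j) = real (codegree E i j) - (if i \<in> e \<and> j \<in> e then 1 else 0)"
proof -
  define F where "F = {f \<in> E. i \<in> f \<and> j \<in> f}"
  have F_minus: "{f \<in> E - {e}. i \<in> f \<and> j \<in> f} = F - {e}"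
    by (auto simp: F_def)
  show ?thesis
  proof (cases "i \<in> e \<and> j \<in> e")
    case True
    have "finite F"
      using assms(1) by (simp add: F_def)
    moreover have "e \<in> F"
      using True assms(2) by (simp add: F_def)
    ultimately have "card F = Suc (card (F - {e}))"
      by (rule card.remove)
    then show ?thesis
      using True unfolding codegree_def F_minus F_def[symmetric] by simp
  next
    case False
    then have "F - {e} = F"
      by (auto simp: F_def)
    then show ?thesis
      using False unfolding codegree_def F_minus F_def[symmetric] by simp
  qed
qed

lemma finite_complete_bip3_edges: "finite (complete_bip3_edges m n)"
  by (rule finite_subset[of _ "Pow {0..<m+n}"]) (auto simp: complete_bip3_edges_def)

lemma codegree_complete_bip3:
  assumes "i < m + n" "j < m + n" "i \<noteq> j"
  shows "codegree (complete_bip3_edges m n) i j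
    = (if i < m \<and> j < m then n else if m \<le> i \<and> m \<le> j then m else m + n - 2)"
proof -
  define K where
    "K = {k \<in> {..<m+n} - {i, j}. (i < m \<or> j < m \<or> k < m) \<and> (m \<le> i \<or> m \<le> j \<or> m \<le> k)}"
  have "{f \<in> complete_bip3_edges m n. i \<in> f \<and> j \<in> f} = (\<lambda>k. {i, j, k}) ` K"
  proof (intro equalityI subsetI)
    fix f assume "f \<in> {f \<in> complete_bip3_edges m n. i \<in> f \<and> j \<in> f}"
    then have f: "f \<subseteq> {0..<m+n}" "card f = 3" "f \<inter> {0..<m} \<noteq> {}" "f \<inter> {m..<m+n} \<noteq> {}"
      and "i \<in> f" "j \<in> f"
      by (auto simp: complete_bip3_edges_def)
    then have "card (f - {i, j}) = 1"
      using assms(3) finite_subset[OF f(1)] by (simp add: card_Diff_subset)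
    then obtain k where k: "f - {i, j} = {k}"
      by (rule card_1_singletonE)
    then have "f = {i, j, k}"
      using \<open>i \<in> f\<close> \<open>j \<in> f\<close> by auto
    moreover have "k \<in> K"
      using f k \<open>f = {i, j, k}\<close> by (auto simp: K_def)
    ultimately show "f \<in> (\<lambda>k. {i, j, k}) ` K"
      by blast
  next
    fix f assume "f \<in> (\<lambda>k. {i, j, k}) ` K"
    then obtain k where "k \<in> K" "f = {i, j, k}"
      by blast
    then show "f \<in> {f \<in> complete_bip3_edges m n. i \<in> f \<and> j \<in> f}"
      using assms by (auto simp: K_def complete_bip3_edges_def)
  qed
  moreover have "inj_on (\<lambda>k. {i, j, k}) K"
    by (auto simp: inj_on_def K_def doubleton_eq_iff insert_eq_iff)
  ultimately have "codegree (complete_bip3_edges m n) i j = card K"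
    by (simp add: codegree_def card_image)
  moreover have "K = {m..<m+n}" if "i < m" "j < m"
    using that by (auto simp: K_def)
  moreover have "K = {..<m}" if "m \<le> i" "m \<le> j"
    using that assms by (auto simp: K_def)
  moreover have "K = {..<m+n} - {i, j}" if "\<not> (i < m \<and> j < m)" "\<not> (m \<le> i \<and> m \<le> j)"
    using that by (auto simp: K_def)
  ultimately show ?thesis
    using assms by (auto simp: card_Diff_subset)
qed

definition bip3_entry :: "nat \<Rightarrow> nat \<Rightarrow> bool \<Rightarrow> bool \<Rightarrow> real" where
  "bip3_entry m n p q =
     (if p \<and> q then 1 - 2 * real n else if p \<or> q then 5 - 2 * real m - 2 * real n else 1 - 2 * real m)"

lemma seidel_complete_bip3_entry:
  assumes "i < m + n" "j < m + n" "i \<noteq> j"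
  shows "seidel_matrix (m + n) (complete_bip3_edges m n) $$ (i,j) = bip3_entry m n (i < m) (j < m)"
  using assms by (auto simp: seidel_matrix_off_diag codegree_complete_bip3 bip3_entry_def of_nat_diff)

lemma seidel_complete_bip3_minus_edge_entry:
  assumes "e \<in> complete_bip3_edges m n" "i < m + n" "j < m + n" "i \<noteq> j"
  shows "seidel_matrix (m + n) (complete_bip3_edges m n - {e}) $$ (i,j)
    = bip3_entry m n (i < m) (j < m) + (if i \<in> e \<and> j \<in> e then 2 else 0)"
  using seidel_complete_bip3_entry[OF assms(2-4)]
    codegree_remove_edge[OF finite_complete_bip3_edges assms(1), of i j]
  by (simp add: seidel_matrix_off_diag assms(2-4))

definition cell :: "nat \<Rightarrow> nat set \<Rightarrow> nat \<Rightarrow> nat" where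
  "cell m e i = (if i < m then if i \<in> e then 1 else 0 else if i \<in> e then 2 else 3)"

definition cell_entry :: "nat \<Rightarrow> nat \<Rightarrow> nat \<Rightarrow> nat \<Rightarrow> real" where
  "cell_entry m n K L = bip3_entry m n (K < 2) (L < 2) + (if K \<in> {1, 2} \<and> L \<in> {1, 2} then 2 else 0)"

lemma quad_form_seidel_minus_edge:
  assumes "e \<in> complete_bip3_edges m n"
    and s: "s = cell_sum (m + n) (cell m e) x" and t: "t = cell_sum (m + n) (cell m e) (\<lambda>i. (x i)\<^sup>2)"
  shows "quad_form (m + n) (seidel_matrix (m + n) (complete_bip3_edges m n - {e})) x
    = reduced_form m n (s 0) (s 1) (s 2) (s 3) (t 0) (t 1) (t 2) (t 3)"
proof -
  have "quad_form (m + n) (seidel_matrix (m + n) (complete_bip3_edges m n - {e})) x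
      = (\<Sum>K<4. \<Sum>L<4. cell_entry m n K L * s K * s L) - (\<Sum>K<4. cell_entry m n K K * t K)"
    unfolding s t
  proof (rule quad_form_cellwise)
    fix i j assume "i < m + n" "j < m + n"
    then show "seidel_matrix (m + n) (complete_bip3_edges m n - {e}) $$ (i,j)
        = (if i = j then 0 else cell_entry m n (cell m e i) (cell m e j))"
      by (simp add: seidel_matrix_diag seidel_complete_bip3_minus_edge_entry[OF assms(1)]
          cell_entry_def cell_def)
  qed (simp add: cell_def)
  also have "\<dots> = reduced_form m n (s 0) (s 1) (s 2) (s 3) (t 0) (t 1) (t 2) (t 3)"
    by (simp add: eval_nat_numeral cell_entry_def bip3_entry_def reduced_form_def
        power2_eq_square algebra_simps)
  finally show ?thesis .
qed

lemma complete_bip3_edge_parts: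
  assumes "e \<in> complete_bip3_edges m n"
  shows "e \<subseteq> {..<m + n}"
    and "card (e \<inter> {..<m}) = 2 \<and> card (e \<inter> {m..<m + n}) = 1
      \<or> card (e \<inter> {..<m}) = 1 \<and> card (e \<inter> {m..<m + n}) = 2"
proof -
  have e: "e \<subseteq> {0..<m + n}" "card e = 3" "e \<inter> {0..<m} \<noteq> {}" "e \<inter> {m..<m + n} \<noteq> {}"
    using assms by (auto simp: complete_bip3_edges_def)
  then show "e \<subseteq> {..<m + n}"
    by auto
  have "finite e"
    using e(1) finite_subset by blast
  have "card (e \<inter> {..<m} \<union> e \<inter> {m..<m + n}) = card (e \<inter> {..<m}) + card (e \<inter> {m..<m + n})"
    using \<open>finite e\<close> by (intro card_Un_disjoint) auto
  moreover have "e \<inter> {..<m} \<union> e \<inter> {m..<m + n} = e"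
    using e(1) by auto
  ultimately have "card (e \<inter> {..<m}) + card (e \<inter> {m..<m + n}) = 3"
    using e(2) by simp
  moreover have "card (e \<inter> {..<m}) \<noteq> 0" "card (e \<inter> {m..<m + n}) \<noteq> 0"
    using e(3,4) \<open>finite e\<close> by (auto simp: lessThan_atLeast0)
  ultimately show "card (e \<inter> {..<m}) = 2 \<and> card (e \<inter> {m..<m + n}) = 1
      \<or> card (e \<inter> {..<m}) = 1 \<and> card (e \<inter> {m..<m + n}) = 2"
    by linarith
qed

lemma cell_sums_bounds:
  assumes "e \<in> complete_bip3_edges m n"
    and s: "s = cell_sum (m + n) (cell m e) x" and t: "t = cell_sum (m + n) (cell m e) (\<lambda>i. (x i)\<^sup>2)"
  shows "(s 0)\<^sup>2 \<le> (real m - 2) * t 0 \<and> (s 1)\<^sup>2 \<le> 2 * t 1 \<and> (s 2)\<^sup>2 \<le> t 2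
      \<and> (s 3)\<^sup>2 \<le> (real n - 1) * t 3
    \<or> (s 0)\<^sup>2 \<le> (real m - 1) * t 0 \<and> (s 1)\<^sup>2 \<le> t 1 \<and> (s 2)\<^sup>2 \<le> 2 * t 2
      \<and> (s 3)\<^sup>2 \<le> (real n - 2) * t 3"
proof -
  note parts = complete_bip3_edge_parts[OF assms(1)]
  have "finite e"
    using parts(1) finite_subset by blast
  have cells: "{i \<in> {..<m + n}. cell m e i = 0} = {..<m} - e \<inter> {..<m}"
    "{i \<in> {..<m + n}. cell m e i = 1} = e \<inter> {..<m}"
    "{i \<in> {..<m + n}. cell m e i = 2} = e \<inter> {m..<m + n}"
    "{i \<in> {..<m + n}. cell m e i = 3} = {m..<m + n} - e \<inter> {m..<m + n}"
    using parts(1) by (auto simp: cell_def)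
  have "card (e \<inter> {..<m}) \<le> m" "card (e \<inter> {m..<m + n}) \<le> n"
    using card_mono[of "{..<m}" "e \<inter> {..<m}"] card_mono[of "{m..<m + n}" "e \<inter> {m..<m + n}"] by auto
  then have card_cells: "real (card {i \<in> {..<m + n}. cell m e i = 0}) = real m - card (e \<inter> {..<m})"
    "real (card {i \<in> {..<m + n}. cell m e i = 1}) = card (e \<inter> {..<m})"
    "real (card {i \<in> {..<m + n}. cell m e i = 2}) = card (e \<inter> {m..<m + n})"
    "real (card {i \<in> {..<m + n}. cell m e i = 3}) = real n - card (e \<inter> {m..<m + n})"
    unfolding cells using \<open>finite e\<close> by (simp_all add: card_Diff_subset of_nat_diff)
  have cs: "(s K)\<^sup>2 \<le> real (card {i \<in> {..<m + n}. cell m e i = K}) * t K" for K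
    unfolding s t by (rule cell_sum_power2_le)
  show ?thesis
    using parts(2) cs[of 0] cs[of 1] cs[of 2] cs[of 3] unfolding card_cells by auto
qed

lemma seidel_minus_edge_quad_form_gt:
  assumes "e \<in> complete_bip3_edges m n" "m \<ge> 3" "n \<ge> 3" and "\<exists>i<m + n. x i \<noteq> 0"
  shows "quad_form (m + n) (seidel_matrix (m + n) (complete_bip3_edges m n - {e})) x
    > quot_eig m n * (\<Sum>i<m + n. (x i)\<^sup>2)"
proof -
  define s t where "s = cell_sum (m + n) (cell m e) x" and "t = cell_sum (m + n) (cell m e) (\<lambda>i. (x i)\<^sup>2)"
  have "(\<Sum>i<m + n. (x i)\<^sup>2) = t 0 + t 1 + t 2 + t 3"
    unfolding t_def by (subst sum_eq_sum_cell_sum[where k = 4]) (simp_all add: cell_def eval_nat_numeral)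
  moreover have "(\<Sum>i<m + n. (x i)\<^sup>2) > 0"
    using assms(4) by (auto intro!: sum_pos2)
  ultimately have "t 0 + t 1 + t 2 + t 3 > 0"
    by simp
  have mn: "real m \<ge> 3" "real n \<ge> 3"
    using assms(2,3) by simp_all
  have "reduced_form m n (s 0) (s 1) (s 2) (s 3) (t 0) (t 1) (t 2) (t 3)
      > quot_eig m n * (t 0 + t 1 + t 2 + t 3)"
    using cell_sums_bounds[OF assms(1) s_def t_def]
  proof
    assume "(s 0)\<^sup>2 \<le> (real m - 2) * t 0 \<and> (s 1)\<^sup>2 \<le> 2 * t 1 \<and> (s 2)\<^sup>2 \<le> t 2
      \<and> (s 3)\<^sup>2 \<le> (real n - 1) * t 3"
    then show ?thesis
      using mn \<open>t 0 + t 1 + t 2 + t 3 > 0\<close> by (intro reduced_form_gt) auto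
  next
    assume "(s 0)\<^sup>2 \<le> (real m - 1) * t 0 \<and> (s 1)\<^sup>2 \<le> t 1 \<and> (s 2)\<^sup>2 \<le> 2 * t 2
      \<and> (s 3)\<^sup>2 \<le> (real n - 2) * t 3"
    then have "reduced_form n m (s 3) (s 2) (s 1) (s 0) (t 3) (t 2) (t 1) (t 0)
        > quot_eig n m * (t 3 + t 2 + t 1 + t 0)"
      using mn \<open>t 0 + t 1 + t 2 + t 3 > 0\<close> by (intro reduced_form_gt) auto
    then show ?thesis
      by (simp add: reduced_form_swap[of m] quot_eig_swap[of m] ac_simps)
  qed
  then show ?thesis
    using quad_form_seidel_minus_edge[OF assms(1) s_def t_def] \<open>_ = t 0 + t 1 + t 2 + t 3\<close> by simp
qed

lemma seidel_minus_edge_quad_form_nonneg: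
  assumes "e \<in> complete_bip3_edges m n" "m \<ge> 3" "n \<ge> 3" and "(\<Sum>i<m + n. x i) = 0"
  shows "quad_form (m + n) (seidel_matrix (m + n) (complete_bip3_edges m n - {e})) x \<ge> 0"
proof -
  define s t where "s = cell_sum (m + n) (cell m e) x" and "t = cell_sum (m + n) (cell m e) (\<lambda>i. (x i)\<^sup>2)"
  have "s 0 + s 1 + s 2 + s 3 = 0"
    using assms(4) unfolding s_def
    by (subst (asm) sum_eq_sum_cell_sum[where k = 4]) (simp_all add: cell_def eval_nat_numeral)
  have mn: "real m \<ge> 3" "real n \<ge> 3"
    using assms(2,3) by simp_all
  have "reduced_form m n (s 0) (s 1) (s 2) (s 3) (t 0) (t 1) (t 2) (t 3) \<ge> 0"
    using cell_sums_bounds[OF assms(1) s_def t_def]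
  proof (elim disjE)
    assume "(s 0)\<^sup>2 \<le> (real m - 2) * t 0 \<and> (s 1)\<^sup>2 \<le> 2 * t 1 \<and> (s 2)\<^sup>2 \<le> t 2
      \<and> (s 3)\<^sup>2 \<le> (real n - 1) * t 3"
    then show ?thesis
      using mn \<open>s 0 + s 1 + s 2 + s 3 = 0\<close>
      by (intro reduced_form_nonneg) auto
  next
    assume "(s 0)\<^sup>2 \<le> (real m - 1) * t 0 \<and> (s 1)\<^sup>2 \<le> t 1 \<and> (s 2)\<^sup>2 \<le> 2 * t 2
      \<and> (s 3)\<^sup>2 \<le> (real n - 2) * t 3"
    then have "reduced_form n m (s 3) (s 2) (s 1) (s 0) (t 3) (t 2) (t 1) (t 0) \<ge> 0"
      using mn \<open>s 0 + s 1 + s 2 + s 3 = 0\<close>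
      by (intro reduced_form_nonneg) auto
    then show ?thesis
      by (simp add: reduced_form_swap[of m])
  qed
  then show ?thesis
    using quad_form_seidel_minus_edge[OF assms(1) s_def t_def] by simp
qed

text \<open>
  The two values of \<open>x\<close> form an eigenvector of the quotient matrix for its eigenvalue \<open>c\<close>.
\<close>

lemma seidel_complete_bip3_eigenvector:
  fixes m n :: nat
  defines "c \<equiv> quot_eig m n"
  defines "x \<equiv> \<lambda>j. if j < m then n * (5 - 2 * real m - 2 * real n) else c - (real m - 1) * (1 - 2 * real n)"
  assumes "i < m + n"
  shows "(\<Sum>j<m + n. seidel_matrix (m + n) (complete_bip3_edges m n) $$ (i,j) * x j) = c * x i"
proof -
  define w where "w = bip3_entry m n (i < m)"
  have "(\<Sum>j<m + n. seidel_matrix (m + n) (complete_bip3_edges m n) $$ (i,j) * x j)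
      = (\<Sum>j<m + n. w (j < m) * x j - (if j = i then w (i < m) * x i else 0))"
    using assms(3) by (intro sum.cong refl) (simp add: w_def seidel_matrix_diag seidel_complete_bip3_entry)
  also have "\<dots> = (\<Sum>j<m. w (j < m) * x j) + (\<Sum>j\<in>{m..<m + n}. w (j < m) * x j) - w (i < m) * x i"
  proof -
    have "(\<Sum>j<m + n. w (j < m) * x j) = (\<Sum>j<m. w (j < m) * x j) + (\<Sum>j\<in>{m..<m + n}. w (j < m) * x j)"
      unfolding lessThan_atLeast0 by (rule sum.atLeastLessThan_concat[symmetric]) simp_all
    then show ?thesis
      using assms(3) by (simp add: sum_subtractf)
  qed
  also have "\<dots> = m * w True * x 0 + n * w False * x m - w (i < m) * x i"
    by (simp add: x_def)
  also have "\<dots> = c * x i"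
  proof (cases "i < m")
    case True
    then show ?thesis
      by (simp add: w_def x_def bip3_entry_def algebra_simps)
  next
    case False
    have "c\<^sup>2 - quot_trace m n * c + quot_det m n = 0"
      unfolding c_def by (rule quot_eig_root) simp_all
    moreover have "m * w True * x 0 + n * w False * x m - w (i < m) * x i - c * x i
        = - (c\<^sup>2 - quot_trace m n * c + quot_det m n)"
      using False unfolding w_def x_def bip3_entry_def quot_trace_def quot_det_def
      by (simp add: algebra_simps power2_eq_square)
    ultimately show ?thesis
      by simp
  qed
  finally show ?thesis .
qed

theorem theorem2p12:
  fixes m n :: nat and e :: "nat set"
  assumes "m \<ge> 3" and "n \<ge> 3"
    and "e \<in> complete_bip3_edges m n"
  shows "seidel_energy (m + n) (complete_bip3_edges m n)
       > seidel_energy (m + n) (complete_bip3_edges m n - {e})"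
proof -
  have "quot_eig m n < 0"
    using assms(1,2) by (intro quot_eig_neg) simp_all
  have "seidel_energy (m + n) (complete_bip3_edges m n - {e}) < - 2 * quot_eig m n"
    unfolding seidel_energy_def
    by (rule sum_cmod_proots_lt[OF seidel_matrix_symmetric seidel_matrix_carrier seidel_matrix_diag
          seidel_minus_edge_quad_form_gt[OF assms(3,1,2)]
          seidel_minus_edge_quad_form_nonneg[OF assms(3,1,2)] \<open>quot_eig m n < 0\<close>])
  moreover have "seidel_energy (m + n) (complete_bip3_edges m n) \<ge> - 2 * quot_eig m n"
    unfolding seidel_energy_def
  proof (rule sum_cmod_proots_ge[OF seidel_matrix_symmetric seidel_matrix_carrier seidel_matrix_diag _
        seidel_complete_bip3_eigenvector])
    show "\<exists>i<m + n. (if i < m then n * (5 - 2 * real m - 2 * real n)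
        else quot_eig m n - (real m - 1) * (1 - 2 * real n)) \<noteq> 0"
      using assms(1,2) by (intro exI[of _ 0]) simp
  qed
  ultimately show ?thesis
    by linarith
qed

end
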